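(* Let $p$ be a prime, $G$ a group, and $H$ a subgroup of $G$ that is closed in the pro-$q$ topology on $G$ for every prime $q$. Let $\Gamma=\langle G,t \mid t^{-1}ht=h\ \text{for all } h\in H\rangle$. If $G$ is residually $p$-finite, then $\Gamma$ is residually $p$-finite.
   Context: The pro-$p$ topology on a group $G$ is the group topology whose basis of neighbourhoods of the identity consists of the normal subgroups of $G$ of $p$-power index. A group is $p$-finite if its order is a finite power of $p$; a group $G$ is residually $p$-finite if for every $g\ne 1$ in $G$ there is a $p$-finite quotient of $G$ in which the image of $g$ is nontrivial. *)

theory Defs
  imports "HOL-Algebra.Algebra" "HOL-Analysis.Abstract_Topology"
begin

definition p_power_index_normal :: "('a, 'b) monoid_scheme \<Rightarrow> nat \<Rightarrow> 'a set \<Rightarrow> bool" where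
  "p_power_index_normal G p N \<longleftrightarrow> N \<lhd> G \<and> (\<exists>n. card (rcosets\<^bsub>G\<^esub> N) = p ^ n)"

definition pro_p_topology :: "('a, 'b) monoid_scheme \<Rightarrow> nat \<Rightarrow> 'a topology" where
  "pro_p_topology G p = topology (\<lambda>U. U \<subseteq> carrier G \<and>
      (\<forall>x\<in>U. \<exists>N. p_power_index_normal G p N \<and> x <#\<^bsub>G\<^esub> N \<subseteq> U))"

definition residually_p_finite :: "('a, 'b) monoid_scheme \<Rightarrow> nat \<Rightarrow> bool" where
  "residually_p_finite G p \<longleftrightarrow>
     (\<forall>g\<in>carrier G. g \<noteq> \<one>\<^bsub>G\<^esub> \<longrightarrow> (\<exists>N. p_power_index_normal G p N \<and> g \<notin> N))"

text \<open>Generators: Inl g for g in G, Inr True = t, Inr False = t^-1.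
  Relations: multiplication table of G, t t^-1 = t^-1 t = 1, t^-1 h t = h for h in H.\<close>

definition hnn_word :: "('a, 'b) monoid_scheme \<Rightarrow> ('a + bool) list \<Rightarrow> bool" where
  "hnn_word G w \<longleftrightarrow> set w \<subseteq> Inl ` carrier G \<union> range Inr"

inductive_set hnn_rel :: "('a, 'b) monoid_scheme \<Rightarrow> 'a set \<Rightarrow> (('a + bool) list \<times> ('a + bool) list) set"
  for G H where
  refl: "hnn_word G w \<Longrightarrow> (w, w) \<in> hnn_rel G H"
| sym: "(u, v) \<in> hnn_rel G H \<Longrightarrow> (v, u) \<in> hnn_rel G H"
| trans: "(u, v) \<in> hnn_rel G H \<Longrightarrow> (v, w) \<in> hnn_rel G H \<Longrightarrow> (u, w) \<in> hnn_rel G H"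
| cong: "(u, v) \<in> hnn_rel G H \<Longrightarrow> (u', v') \<in> hnn_rel G H \<Longrightarrow> (u @ u', v @ v') \<in> hnn_rel G H"
| mult: "g \<in> carrier G \<Longrightarrow> h \<in> carrier G \<Longrightarrow> ([Inl g, Inl h], [Inl (g \<otimes>\<^bsub>G\<^esub> h)]) \<in> hnn_rel G H"
| one: "([Inl \<one>\<^bsub>G\<^esub>], []) \<in> hnn_rel G H"
| t_inv1: "([Inr True, Inr False], []) \<in> hnn_rel G H"
| t_inv2: "([Inr False, Inr True], []) \<in> hnn_rel G H"
| hnn: "h \<in> H \<Longrightarrow> h \<in> carrier G \<Longrightarrow> ([Inr False, Inl h, Inr True], [Inl h]) \<in> hnn_rel G H"

definition HNN_trivial :: "('a, 'b) monoid_scheme \<Rightarrow> 'a set \<Rightarrow> ('a + bool) list set monoid" where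
  "HNN_trivial G H =
     \<lparr> carrier = {w. hnn_word G w} // hnn_rel G H,
       monoid.mult = (\<lambda>A B. {w. \<exists>a\<in>A. \<exists>b\<in>B. (a @ b, w) \<in> hnn_rel G H}),
       monoid.one = {w. ([], w) \<in> hnn_rel G H} \<rparr>"

end

theory Submission
  imports Defs
begin

text \<open>Every element of \<open>\<Gamma>\<close> can be written as \<open>c\<^sub>1 t\<^sup>a\<^sup>1 c\<^sub>1\<inverse> \<cdots> c\<^sub>n t\<^sup>a\<^sup>n c\<^sub>n\<inverse> g\<close>
  with \<open>a\<^sub>i \<noteq> 0\<close> and \<open>c\<^sub>i\<inverse> c\<^sub>i\<^sub>+\<^sub>1 \<notin> H\<close>. Since \<open>H\<close> is closed in the pro-\<open>p\<close> topology and \<open>G\<close> is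
  residually \<open>p\<close>-finite, there is a normal subgroup \<open>N\<close> of \<open>p\<close>-power index with \<open>c\<^sub>i\<inverse> c\<^sub>i\<^sub>+\<^sub>1 N \<inter> H = {}\<close>
  and \<open>g \<notin> N\<close> unless \<open>g = 1\<close>; choose also \<open>m = p\<^sup>e\<close> not dividing \<open>a\<^sub>1 \<cdots> a\<^sub>n\<close>.
  Then \<open>\<Gamma>\<close> acts on \<open>G/N \<times> (\<int>/m)\<^sup>n\<^sup>+\<^sup>1\<close>: \<open>G\<close> by left multiplication on the cosets, \<open>t\<close> by unipotent
  shears of the fibres that depend only on the double coset \<open>H C\<close> of the base point. The image is a
  finite group of \<open>p\<close>-power exponent, hence a \<open>p\<close>-group, and the element above acts nontrivially:
  it either moves the coset \<open>N\<close> or carries the first basis vector over \<open>N\<close> to a vector whose last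
  coordinate is \<open>a\<^sub>1 \<cdots> a\<^sub>n\<close> mod \<open>m\<close>.\<close>

section \<open>Finite \<open>p\<close>-groups\<close>

lemma prime_power_if_prime_divisors_eq:
  fixes p n :: nat
  assumes p: "Factorial_Ring.prime p" and n: "0 < n"
    and q: "\<And>q. Factorial_Ring.prime q \<Longrightarrow> q dvd n \<Longrightarrow> q = p"
  shows "\<exists>k. n = p ^ k"
  using n q
proof (induction n rule: less_induct)
  case (less n)
  show ?case
  proof (cases "n = 1")
    case True then show ?thesis by (intro exI[of _ 0]) simp
  next
    case False
    then obtain q where qp: "Factorial_Ring.prime q" "q dvd n"
      using prime_factor_nat by blast
    then have "q = p" using less by blast
    then obtain n' where n': "n = p * n'" using qp by auto
    have p1: "p > 1" using p prime_gt_1_nat by blast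
    have "0 < n'" using n' less(2) by simp
    moreover have "n' < n" using n' p1 \<open>0 < n'\<close> by simp
    moreover have "\<And>q. Factorial_Ring.prime q \<Longrightarrow> q dvd n' \<Longrightarrow> q = p"
      using less(3) n' by auto
    ultimately obtain k where "n' = p ^ k" using less(1) by blast
    then show ?thesis using n' by (intro exI[of _ "Suc k"]) simp
  qed
qed

lemma prime_power_not_dvd:
  fixes P :: int
  assumes p: "Factorial_Ring.prime p" and P: "P \<noteq> 0"
  obtains e where "e > 0" "\<not> int (p ^ e) dvd P"
proof
  let ?e = "nat \<bar>P\<bar>"
  show "?e > 0" using P by simp
  have "?e < 2 ^ ?e" by (rule less_exp)
  also have "(2::nat) ^ ?e \<le> p ^ ?e" using prime_ge_2_nat[OF p] by (simp add: power_mono)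
  finally have "\<bar>P\<bar> < int (p ^ ?e)" by linarith
  then show "\<not> int (p ^ ?e) dvd P" using dvd_imp_le_int[OF P] by fastforce
qed

lemma (in group_hom) card_rcosets_kernel:
  "card (rcosets\<^bsub>G\<^esub> (kernel G H h)) = card (h ` carrier G)"
proof -
  let ?I = "H\<lparr>carrier := h ` carrier G\<rparr>"
  have "group ?I" using H.subgroup_imp_group[OF img_is_subgroup] .
  moreover have "h \<in> hom G ?I" using homh by (auto simp: hom_def)
  ultimately have "group_hom G ?I h"
    using G.group_axioms by (simp add: group_hom_def group_hom_axioms_def)
  then have "(\<lambda>Z. the_elem (h ` Z)) \<in> iso (G Mod kernel G ?I h) ?I"
    by (rule group_hom.FactGroup_iso_set) simp
  then have "bij_betw (\<lambda>Z. the_elem (h ` Z)) (rcosets\<^bsub>G\<^esub> (kernel G H h)) (h ` carrier G)"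
    by (simp add: iso_def FactGroup_def kernel_def)
  then show ?thesis by (rule bij_betw_same_card)
qed

context group
begin

lemma card_subgroup_prime_power:
  assumes p: "Factorial_Ring.prime p" and "order G = p ^ n" and "subgroup S G"
  shows "\<exists>j. card S = p ^ j"
proof -
  have "card S dvd p ^ n" using lagrange[OF \<open>subgroup S G\<close>] assms(2) by (metis dvd_triv_right)
  then show ?thesis using divides_primepow_nat[OF p] by blast
qed

text \<open>An element of prime order \<open>q\<close>, found by Sylow's theorem for each prime divisor \<open>q\<close> of
  the order, forces \<open>q = p\<close>.\<close>

lemma order_prime_power_if_exponent:
  assumes fin: "finite (carrier G)" and p: "Factorial_Ring.prime p"
    and ex: "\<And>x. x \<in> carrier G \<Longrightarrow> x [^] ((p::nat) ^ k) = \<one>"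
  shows "\<exists>n. order G = p ^ n"
proof (rule prime_power_if_prime_divisors_eq[OF p])
  show "0 < order G" using fin one_closed by (auto simp: order_def card_gt_0_iff)
next
  fix q assume q: "Factorial_Ring.prime q" "q dvd order G"
  then obtain m where "order G = q ^ 1 * m" by auto
  then obtain S where S: "subgroup S G" "card S = q ^ 1" using sylow_thm[OF q(1) is_group _ fin] by blast
  have "card S \<noteq> 0" using S(2) q(1) prime_gt_0_nat by simp
  then have finS: "finite S" by (meson card.infinite)
  have "card S > 1" using S(2) q(1) prime_gt_1_nat by simp
  then have "\<not> (\<forall>x\<in>S. \<forall>y\<in>S. x = y)" using card_le_Suc0_iff_eq[OF finS] by simp
  then obtain x where x: "x \<in> S" "x \<noteq> \<one>" by blast
  have xG: "x \<in> carrier G" using S(1) x(1) subgroup.subset by blast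
  let ?S = "G\<lparr>carrier := S\<rparr>"
  have "x [^]\<^bsub>?S\<^esub> order ?S = \<one>\<^bsub>?S\<^esub>"
    using group.pow_order_eq_1[OF subgroup_imp_group[OF S(1)]] x(1) by simp
  then have "x [^] q = \<one>" using S(2) nat_pow_consistent by (simp add: order_def)
  then have "ord x dvd q" and "ord x dvd p ^ k" using pow_eq_id[OF xG] ex[OF xG] by simp_all
  moreover have "ord x \<noteq> 1" using ord_eq_1[OF xG] x(2) by simp
  ultimately have "q dvd p ^ k" using q(1) by (metis prime_nat_iff)
  then show "q = p" using q(1) p by (metis prime_dvd_power_nat primes_dvd_imp_eq)
qed

end

section \<open>The pro-\<open>p\<close> topology\<close>

lemma p_power_index_normal_finite:
  assumes "Factorial_Ring.prime p" "p_power_index_normal G p N"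
  shows "finite (rcosets\<^bsub>G\<^esub> N)"
proof -
  obtain n where "card (rcosets\<^bsub>G\<^esub> N) = p ^ n" using assms(2) by (auto simp: p_power_index_normal_def)
  moreover have "p ^ n \<noteq> 0" using assms(1) prime_gt_0_nat by simp
  ultimately show ?thesis by (metis card.infinite)
qed

context group
begin

text \<open>\<open>G/(N\<^sub>1 \<inter> N\<^sub>2)\<close> embeds into the \<open>p\<close>-group \<open>G/N\<^sub>1 \<times> G/N\<^sub>2\<close>.\<close>

lemma p_power_index_normal_Int:
  assumes p: "Factorial_Ring.prime p"
    and N1: "p_power_index_normal G p N1" and N2: "p_power_index_normal G p N2"
  shows "p_power_index_normal G p (N1 \<inter> N2)"
proof -
  have n1: "N1 \<lhd> G" and n2: "N2 \<lhd> G" using N1 N2 by (auto simp: p_power_index_normal_def)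
  obtain a where a: "card (rcosets N1) = p ^ a" using N1 by (auto simp: p_power_index_normal_def)
  obtain b where b: "card (rcosets N2) = p ^ b" using N2 by (auto simp: p_power_index_normal_def)
  let ?Q = "(G Mod N1) \<times>\<times> (G Mod N2)"
  let ?f = "\<lambda>x. (N1 #> x, N2 #> x)"
  have "group ?Q" using DirProd_group normal.factorgroup_is_group n1 n2 by blast
  moreover have "?f \<in> hom G ?Q"
    by (rule homI) (auto simp: FactGroup_def RCOSETS_def normal.rcos_sum[OF n1] normal.rcos_sum[OF n2])
  ultimately have f: "group_hom G ?Q ?f" using is_group by (simp add: group_hom_def group_hom_axioms_def)
  have ker: "kernel G ?Q ?f = N1 \<inter> N2"
  proof -
    have s1: "subgroup N1 G" and s2: "subgroup N2 G" using n1 n2 normal_imp_subgroup by auto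
    show ?thesis
      using coset_join1[OF _ _ s1] coset_join1[OF _ _ s2] coset_join2[OF _ s1] coset_join2[OF _ s2]
        subgroup.subset[OF s1] subgroup.subset[OF s2]
      by (auto simp: kernel_def)
  qed
  have "order ?Q = p ^ (a + b)"
    using a b by (simp add: order_def FactGroup_def card_cartesian_product power_add)
  then obtain j where "card (?f ` carrier G) = p ^ j"
    using group.card_subgroup_prime_power[OF \<open>group ?Q\<close> p _ group_hom.img_is_subgroup[OF f]] by blast
  then have "card (rcosets (N1 \<inter> N2)) = p ^ j" using group_hom.card_rcosets_kernel[OF f] ker by simp
  moreover have "N1 \<inter> N2 \<lhd> G" using group_hom.normal_kernel[OF f] ker by simp
  ultimately show ?thesis by (auto simp: p_power_index_normal_def)
qed

lemma p_power_index_normal_carrier: "p_power_index_normal G p (carrier G)"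
proof -
  have "rcosets (carrier G) = {carrier G}"
    using one_closed by (auto simp: RCOSETS_def coset_join2 subgroup_self)
  then show ?thesis using normal_self by (auto simp: p_power_index_normal_def intro: exI[of _ 0])
qed

lemma istopology_pro_p:
  assumes p: "Factorial_Ring.prime p"
  shows "istopology (\<lambda>U. U \<subseteq> carrier G \<and> (\<forall>x\<in>U. \<exists>N. p_power_index_normal G p N \<and> x <# N \<subseteq> U))"
  unfolding istopology_def
proof (rule conjI; intro allI impI)
  fix S T assume S: "S \<subseteq> carrier G \<and> (\<forall>x\<in>S. \<exists>N. p_power_index_normal G p N \<and> x <# N \<subseteq> S)"
    and T: "T \<subseteq> carrier G \<and> (\<forall>x\<in>T. \<exists>N. p_power_index_normal G p N \<and> x <# N \<subseteq> T)"
  show "S \<inter> T \<subseteq> carrier G \<and> (\<forall>x\<in>S \<inter> T. \<exists>N. p_power_index_normal G p N \<and> x <# N \<subseteq> S \<inter> T)"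
  proof (intro conjI ballI)
    show "S \<inter> T \<subseteq> carrier G" using S by blast
    fix x assume "x \<in> S \<inter> T"
    then obtain N1 N2 where "p_power_index_normal G p N1" "x <# N1 \<subseteq> S"
      "p_power_index_normal G p N2" "x <# N2 \<subseteq> T" using S T by blast
    then show "\<exists>N. p_power_index_normal G p N \<and> x <# N \<subseteq> S \<inter> T"
      by (intro exI[of _ "N1 \<inter> N2"]) (auto simp: p_power_index_normal_Int[OF p] l_coset_def)
  qed
next
  fix K assume K: "\<forall>S\<in>K. S \<subseteq> carrier G \<and> (\<forall>x\<in>S. \<exists>N. p_power_index_normal G p N \<and> x <# N \<subseteq> S)"
  show "\<Union> K \<subseteq> carrier G \<and> (\<forall>x\<in>\<Union> K. \<exists>N. p_power_index_normal G p N \<and> x <# N \<subseteq> \<Union> K)"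
  proof (intro conjI ballI)
    show "\<Union> K \<subseteq> carrier G" using K by blast
    fix x assume "x \<in> \<Union> K"
    then obtain S where S: "S \<in> K" "x \<in> S" by blast
    then obtain N where "p_power_index_normal G p N" "x <# N \<subseteq> S" using K by blast
    then show "\<exists>N. p_power_index_normal G p N \<and> x <# N \<subseteq> \<Union> K" using S(1) by blast
  qed
qed

lemma openin_pro_p_topology:
  assumes p: "Factorial_Ring.prime p"
  shows "openin (pro_p_topology G p) =
    (\<lambda>U. U \<subseteq> carrier G \<and> (\<forall>x\<in>U. \<exists>N. p_power_index_normal G p N \<and> x <# N \<subseteq> U))"
  unfolding pro_p_topology_def using topology_inverse'[OF istopology_pro_p[OF p]] .

lemma topspace_pro_p_topology:
  assumes p: "Factorial_Ring.prime p"
  shows "topspace (pro_p_topology G p) = carrier G"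
proof
  show "topspace (pro_p_topology G p) \<subseteq> carrier G"
    unfolding topspace_def using openin_pro_p_topology[OF p] by auto
  have "openin (pro_p_topology G p) (carrier G)"
    unfolding openin_pro_p_topology[OF p] using p_power_index_normal_carrier
    by (auto simp: l_coset_def intro!: exI[of _ "carrier G"])
  then show "carrier G \<subseteq> topspace (pro_p_topology G p)" by (auto simp: topspace_def)
qed

lemma closedin_pro_p_topology_coset_disjoint:
  assumes p: "Factorial_Ring.prime p"
    and cl: "closedin (pro_p_topology G p) H" and x: "x \<in> carrier G" "x \<notin> H"
  obtains N where "p_power_index_normal G p N" "(x <# N) \<inter> H = {}"
proof -
  have "openin (pro_p_topology G p) (carrier G - H)"
    using cl topspace_pro_p_topology[OF p] by (simp add: closedin_def)
  then obtain N where "p_power_index_normal G p N" "x <# N \<subseteq> carrier G - H"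
    using x unfolding openin_pro_p_topology[OF p] by blast
  then show ?thesis using that by blast
qed

lemma closedin_pro_p_topology_finite_avoid:
  assumes p: "Factorial_Ring.prime p" and cl: "closedin (pro_p_topology G p) H"
    and N0: "p_power_index_normal G p N0" and S: "finite S" "S \<subseteq> carrier G - H"
  shows "\<exists>N\<subseteq>N0. p_power_index_normal G p N \<and> (\<forall>x\<in>S. (x <# N) \<inter> H = {})"
  using S
proof (induction S rule: finite_induct)
  case empty
  then show ?case using N0 by blast
next
  case (insert x S)
  obtain N where N: "N \<subseteq> N0" "p_power_index_normal G p N" "\<forall>y\<in>S. (y <# N) \<inter> H = {}"
    using insert by blast
  obtain M where M: "p_power_index_normal G p M" "(x <# M) \<inter> H = {}"
    using closedin_pro_p_topology_coset_disjoint[OF p cl] insert.prems by blast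
  have "\<forall>y\<in>insert x S. (y <# (N \<inter> M)) \<inter> H = {}"
    using N(3) M(2) by (auto simp: l_coset_def)
  then show ?case using N(1,2) M(1) p_power_index_normal_Int[OF p] by blast
qed

end

section \<open>The HNN extension as a group\<close>

fun inv_letter :: "('a, 'b) monoid_scheme \<Rightarrow> ('a + bool) \<Rightarrow> ('a + bool)" where
  "inv_letter G (Inl g) = Inl (inv\<^bsub>G\<^esub> g)"
| "inv_letter G (Inr b) = Inr (\<not> b)"

definition inv_word :: "('a, 'b) monoid_scheme \<Rightarrow> ('a + bool) list \<Rightarrow> ('a + bool) list" where
  "inv_word G w = rev (map (inv_letter G) w)"

lemma hnn_word_append[simp]: "hnn_word G (u @ v) \<longleftrightarrow> hnn_word G u \<and> hnn_word G v"
  by (auto simp: hnn_word_def)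

lemma hnn_word_Nil[simp]: "hnn_word G []"
  by (simp add: hnn_word_def)

lemma hnn_word_Cons[simp]: "hnn_word G (x # v) \<longleftrightarrow> x \<in> Inl ` carrier G \<union> range Inr \<and> hnn_word G v"
  by (auto simp: hnn_word_def)

context group
begin

lemma hnn_rel_hnn_word: "(u, v) \<in> hnn_rel G H \<Longrightarrow> hnn_word G u \<and> hnn_word G v"
  by (induction rule: hnn_rel.induct)
     (auto simp: hnn_word_def m_closed one_closed)

lemma equiv_hnn_rel: "equiv {w. hnn_word G w} (hnn_rel G H)"
proof (rule equivI)
  show "hnn_rel G H \<subseteq> {w. hnn_word G w} \<times> {w. hnn_word G w}" using hnn_rel_hnn_word by auto
  show "refl_on {w. hnn_word G w} (hnn_rel G H)"
    by (auto simp: refl_on_def dest: hnn_rel_hnn_word intro: hnn_rel.refl)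
  show "sym (hnn_rel G H)" by (auto simp: sym_def intro: hnn_rel.sym)
  show "trans (hnn_rel G H)" by (auto simp: trans_def intro: hnn_rel.trans)
qed

lemma hnn_class_eq_iff:
  "hnn_word G u \<Longrightarrow> hnn_word G v \<Longrightarrow> hnn_rel G H `` {u} = hnn_rel G H `` {v} \<longleftrightarrow> (u, v) \<in> hnn_rel G H"
  using eq_equiv_class_iff[OF equiv_hnn_rel] by simp

lemma HNN_mult_class:
  assumes "hnn_word G a" "hnn_word G b"
  shows "hnn_rel G H `` {a} \<otimes>\<^bsub>HNN_trivial G H\<^esub> hnn_rel G H `` {b} = hnn_rel G H `` {a @ b}"
proof -
  have "{w. \<exists>a'\<in>hnn_rel G H `` {a}. \<exists>b'\<in>hnn_rel G H `` {b}. (a' @ b', w) \<in> hnn_rel G H}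
      = hnn_rel G H `` {a @ b}"
  proof (intro equalityI subsetI)
    fix w assume "w \<in> {w. \<exists>a'\<in>hnn_rel G H `` {a}. \<exists>b'\<in>hnn_rel G H `` {b}. (a' @ b', w) \<in> hnn_rel G H}"
    then obtain a' b' where "(a, a') \<in> hnn_rel G H" "(b, b') \<in> hnn_rel G H" "(a' @ b', w) \<in> hnn_rel G H" by auto
    then show "w \<in> hnn_rel G H `` {a @ b}" by (auto intro: hnn_rel.cong hnn_rel.trans)
  next
    fix w assume "w \<in> hnn_rel G H `` {a @ b}"
    then show "w \<in> {w. \<exists>a'\<in>hnn_rel G H `` {a}. \<exists>b'\<in>hnn_rel G H `` {b}. (a' @ b', w) \<in> hnn_rel G H}"
      using assms by (auto intro: hnn_rel.refl)
  qed
  then show ?thesis by (simp add: HNN_trivial_def)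
qed

lemma HNN_one: "\<one>\<^bsub>HNN_trivial G H\<^esub> = hnn_rel G H `` {[]}"
  by (auto simp: HNN_trivial_def)

lemma HNN_carrier: "carrier (HNN_trivial G H) = {w. hnn_word G w} // hnn_rel G H"
  by (simp add: HNN_trivial_def)

lemma hnn_rel_letter_inv: "hnn_word G [x] \<Longrightarrow> ([x, inv_letter G x], []) \<in> hnn_rel G H"
proof (cases x)
  case (Inl g)
  assume "hnn_word G [x]"
  then have g: "g \<in> carrier G" using Inl by (auto simp: hnn_word_def)
  have "([Inl g, Inl (inv\<^bsub>G\<^esub> g)], [Inl (g \<otimes>\<^bsub>G\<^esub> inv\<^bsub>G\<^esub> g)]) \<in> hnn_rel G H"
    using g by (intro hnn_rel.mult) auto
  moreover have "g \<otimes>\<^bsub>G\<^esub> inv\<^bsub>G\<^esub> g = \<one>\<^bsub>G\<^esub>" using r_inv[OF g] .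
  ultimately show ?thesis using Inl by (auto intro: hnn_rel.trans hnn_rel.one)
next
  case (Inr b)
  then show ?thesis by (cases b) (auto intro: hnn_rel.t_inv1 hnn_rel.t_inv2)
qed

lemma hnn_word_inv_word: "hnn_word G w \<Longrightarrow> hnn_word G (inv_word G w)"
proof (induction w)
  case (Cons x w)
  then have "hnn_word G [inv_letter G x]" by (cases x) (auto simp: hnn_word_def)
  then show ?case using Cons by (auto simp: inv_word_def hnn_word_def)
qed (simp add: inv_word_def)

lemma inv_word_inv_word: "hnn_word G w \<Longrightarrow> inv_word G (inv_word G w) = w"
proof (induction w)
  case (Cons x w)
  have "inv_letter G (inv_letter G x) = x" using Cons.prems by (cases x) (auto simp: hnn_word_def)
  then show ?case using Cons by (auto simp: inv_word_def)
qed (simp add: inv_word_def)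

lemma hnn_rel_word_inv_word: "hnn_word G w \<Longrightarrow> (w @ inv_word G w, []) \<in> hnn_rel G H"
proof (induction w)
  case Nil then show ?case by (auto simp: inv_word_def intro: hnn_rel.refl)
next
  case (Cons x w)
  have x: "hnn_word G [x]" and w: "hnn_word G w" using Cons.prems by auto
  have xi: "hnn_word G [inv_letter G x]" using x by (cases x) (auto simp: hnn_word_def)
  have "([x] @ (w @ inv_word G w) @ [inv_letter G x], [x] @ [] @ [inv_letter G x]) \<in> hnn_rel G H"
    using Cons.IH[OF w] x xi by (intro hnn_rel.cong hnn_rel.refl) auto
  then have "([x] @ (w @ inv_word G w) @ [inv_letter G x], []) \<in> hnn_rel G H"
    using hnn_rel_letter_inv[OF x] by (auto intro: hnn_rel.trans)
  then show ?case by (simp add: inv_word_def)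
qed

lemma group_HNN_trivial: "group (HNN_trivial G H)"
proof (rule groupI)
  fix x y assume x: "x \<in> carrier (HNN_trivial G H)" and y: "y \<in> carrier (HNN_trivial G H)"
  then obtain a b where "x = hnn_rel G H `` {a}" "hnn_word G a" "y = hnn_rel G H `` {b}" "hnn_word G b"
    by (auto simp: HNN_carrier elim!: quotientE)
  then show "x \<otimes>\<^bsub>HNN_trivial G H\<^esub> y \<in> carrier (HNN_trivial G H)"
    by (simp add: HNN_mult_class HNN_carrier quotientI)
next
  show "\<one>\<^bsub>HNN_trivial G H\<^esub> \<in> carrier (HNN_trivial G H)"
    by (simp add: HNN_one HNN_carrier quotientI)
next
  fix x y z assume x: "x \<in> carrier (HNN_trivial G H)" and y: "y \<in> carrier (HNN_trivial G H)"
    and z: "z \<in> carrier (HNN_trivial G H)"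
  then obtain a b c where "x = hnn_rel G H `` {a}" "hnn_word G a" "y = hnn_rel G H `` {b}" "hnn_word G b"
     "z = hnn_rel G H `` {c}" "hnn_word G c"
    by (auto simp: HNN_carrier elim!: quotientE)
  then show "x \<otimes>\<^bsub>HNN_trivial G H\<^esub> y \<otimes>\<^bsub>HNN_trivial G H\<^esub> z =
      x \<otimes>\<^bsub>HNN_trivial G H\<^esub> (y \<otimes>\<^bsub>HNN_trivial G H\<^esub> z)"
    by (simp add: HNN_mult_class)
next
  fix x assume x: "x \<in> carrier (HNN_trivial G H)"
  then obtain a where "x = hnn_rel G H `` {a}" "hnn_word G a"
    by (auto simp: HNN_carrier elim!: quotientE)
  then show "\<one>\<^bsub>HNN_trivial G H\<^esub> \<otimes>\<^bsub>HNN_trivial G H\<^esub> x = x"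
    by (simp add: HNN_mult_class HNN_one)
next
  fix x assume x: "x \<in> carrier (HNN_trivial G H)"
  then obtain a where a: "x = hnn_rel G H `` {a}" "hnn_word G a"
    by (auto simp: HNN_carrier elim!: quotientE)
  have iw: "hnn_word G (inv_word G a)" using hnn_word_inv_word[OF a(2)] .
  have "(inv_word G a @ inv_word G (inv_word G a), []) \<in> hnn_rel G H" using hnn_rel_word_inv_word[OF iw] .
  then have "(inv_word G a @ a, []) \<in> hnn_rel G H" using inv_word_inv_word[OF a(2)] by simp
  then have "hnn_rel G H `` {inv_word G a @ a} = hnn_rel G H `` {[]}"
    using hnn_class_eq_iff iw a(2) by simp
  then show "\<exists>y\<in>carrier (HNN_trivial G H). y \<otimes>\<^bsub>HNN_trivial G H\<^esub> x = \<one>\<^bsub>HNN_trivial G H\<^esub>"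
    using a iw by (intro bexI[of _ "hnn_rel G H `` {inv_word G a}"]) (auto simp: HNN_mult_class HNN_one HNN_carrier quotientI)
qed

end

section \<open>Homomorphisms out of the HNN extension\<close>

definition eval_letter :: "('c, 'd) monoid_scheme \<Rightarrow> ('a \<Rightarrow> 'c) \<Rightarrow> 'c \<Rightarrow> ('a + bool) \<Rightarrow> 'c" where
  "eval_letter Q f \<tau> x = (case x of Inl g \<Rightarrow> f g | Inr b \<Rightarrow> (if b then \<tau> else inv\<^bsub>Q\<^esub> \<tau>))"

definition eval_word :: "('c, 'd) monoid_scheme \<Rightarrow> ('a \<Rightarrow> 'c) \<Rightarrow> 'c \<Rightarrow> ('a + bool) list \<Rightarrow> 'c" where
  "eval_word Q f \<tau> w = foldr (\<lambda>x acc. eval_letter Q f \<tau> x \<otimes>\<^bsub>Q\<^esub> acc) w \<one>\<^bsub>Q\<^esub>"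

definition HNN_lift :: "('c, 'd) monoid_scheme \<Rightarrow> ('a \<Rightarrow> 'c) \<Rightarrow> 'c \<Rightarrow> ('a + bool) list set \<Rightarrow> 'c" where
  "HNN_lift Q f \<tau> A = eval_word Q f \<tau> (SOME a. a \<in> A)"

locale hnn_rep = G: group G + Q: group Q
  for G :: "('a, 'b) monoid_scheme" and Q :: "('c, 'd) monoid_scheme" +
  fixes H :: "'a set" and f \<tau>
  assumes f: "f \<in> hom G Q" and \<tau>: "\<tau> \<in> carrier Q"
    and comm: "\<And>h. h \<in> H \<Longrightarrow> h \<in> carrier G \<Longrightarrow> f h \<otimes>\<^bsub>Q\<^esub> \<tau> = \<tau> \<otimes>\<^bsub>Q\<^esub> f h"
begin

lemma group_hom_f: "group_hom G Q f" using G.group_axioms Q.group_axioms f by (simp add: group_hom_def group_hom_axioms_def)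

lemma eval_letter_closed: "x \<in> Inl ` carrier G \<union> range Inr \<Longrightarrow> eval_letter Q f \<tau> x \<in> carrier Q"
  using f \<tau> by (auto simp: eval_letter_def hom_def)

lemma eval_word_closed: "hnn_word G w \<Longrightarrow> eval_word Q f \<tau> w \<in> carrier Q"
  by (induction w) (auto simp: eval_word_def hnn_word_Cons eval_letter_closed Q.m_closed Q.one_closed hnn_word_def)

lemma eval_word_append: "hnn_word G u \<Longrightarrow> hnn_word G v \<Longrightarrow> eval_word Q f \<tau> (u @ v) = eval_word Q f \<tau> u \<otimes>\<^bsub>Q\<^esub> eval_word Q f \<tau> v"
proof (induction u)
  case Nil then show ?case using eval_word_closed[OF Nil(2)] by (simp add: eval_word_def)
next
  case (Cons x u)
  then have x: "x \<in> Inl ` carrier G \<union> range Inr" and u: "hnn_word G u" by (auto simp: hnn_word_Cons)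
  have "eval_word Q f \<tau> ((x # u) @ v) = eval_letter Q f \<tau> x \<otimes>\<^bsub>Q\<^esub> eval_word Q f \<tau> (u @ v)" by (simp add: eval_word_def)
  also have "\<dots> = eval_letter Q f \<tau> x \<otimes>\<^bsub>Q\<^esub> (eval_word Q f \<tau> u \<otimes>\<^bsub>Q\<^esub> eval_word Q f \<tau> v)" using Cons u by simp
  also have "\<dots> = (eval_letter Q f \<tau> x \<otimes>\<^bsub>Q\<^esub> eval_word Q f \<tau> u) \<otimes>\<^bsub>Q\<^esub> eval_word Q f \<tau> v"
    using eval_letter_closed[OF x] eval_word_closed[OF u] eval_word_closed[OF Cons(3)] by (simp add: Q.m_assoc)
  finally show ?case by (simp add: eval_word_def)
qed

lemma eval_word_single: "x \<in> Inl ` carrier G \<union> range Inr \<Longrightarrow> eval_word Q f \<tau> [x] = eval_letter Q f \<tau> x"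
  using eval_letter_closed by (simp add: eval_word_def)

lemma eval_word_hnn_rel: "(u, v) \<in> hnn_rel G H \<Longrightarrow> eval_word Q f \<tau> u = eval_word Q f \<tau> v"
proof (induction rule: hnn_rel.induct)
  case (cong u v u' v')
  then show ?case using G.hnn_rel_hnn_word by (simp add: eval_word_append)
next
  case (mult g h)
  then show ?case using f
    by (simp add: eval_word_def eval_letter_def hom_mult G.m_closed Q.m_assoc hom_in_carrier)
next
  case one
  then show ?case using group_hom.hom_one[OF group_hom_f] by (simp add: eval_word_def eval_letter_def)
next
  case t_inv1
  then show ?case using \<tau> by (simp add: eval_word_def eval_letter_def)
next
  case t_inv2
  then show ?case using \<tau> by (simp add: eval_word_def eval_letter_def)
next
  case (hnn h)
  have fh: "f h \<in> carrier Q" using f hnn(2) by (simp add: hom_in_carrier)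
  have "eval_word Q f \<tau> [Inr False, Inl h, Inr True] = inv\<^bsub>Q\<^esub> \<tau> \<otimes>\<^bsub>Q\<^esub> (f h \<otimes>\<^bsub>Q\<^esub> \<tau>)"
    using fh \<tau> by (simp add: eval_word_def eval_letter_def)
  also have "\<dots> = inv\<^bsub>Q\<^esub> \<tau> \<otimes>\<^bsub>Q\<^esub> (\<tau> \<otimes>\<^bsub>Q\<^esub> f h)" using comm hnn by simp
  also have "\<dots> = f h" using fh \<tau> by (simp add: Q.m_assoc[symmetric])
  finally show ?case using fh by (simp add: eval_word_def eval_letter_def)
qed auto

lemma HNN_lift_class: "hnn_word G a \<Longrightarrow> HNN_lift Q f \<tau> (hnn_rel G H `` {a}) = eval_word Q f \<tau> a"
proof -
  assume a: "hnn_word G a"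
  have "a \<in> hnn_rel G H `` {a}" using a by (auto intro: hnn_rel.refl)
  then have "(a, SOME b. b \<in> hnn_rel G H `` {a}) \<in> hnn_rel G H" by (metis Image_singleton_iff someI)
  then show ?thesis unfolding HNN_lift_def by (simp add: eval_word_hnn_rel)
qed

lemma HNN_lift_hom: "HNN_lift Q f \<tau> \<in> hom (HNN_trivial G H) Q"
proof (rule homI)
  fix x assume "x \<in> carrier (HNN_trivial G H)"
  then obtain a where "x = hnn_rel G H `` {a}" "hnn_word G a"
    by (auto simp: G.HNN_carrier elim!: quotientE)
  then show "HNN_lift Q f \<tau> x \<in> carrier Q" by (simp add: HNN_lift_class eval_word_closed)
next
  fix x y assume x: "x \<in> carrier (HNN_trivial G H)" and y: "y \<in> carrier (HNN_trivial G H)"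
  then obtain a b where "x = hnn_rel G H `` {a}" "hnn_word G a" "y = hnn_rel G H `` {b}" "hnn_word G b"
    by (auto simp: G.HNN_carrier elim!: quotientE)
  then show "HNN_lift Q f \<tau> (x \<otimes>\<^bsub>HNN_trivial G H\<^esub> y) = HNN_lift Q f \<tau> x \<otimes>\<^bsub>Q\<^esub> HNN_lift Q f \<tau> y"
    by (simp add: G.HNN_mult_class HNN_lift_class eval_word_append)
qed

end

section \<open>Normal form\<close>

locale hnn_ext = G: group G for G :: "('a, 'b) monoid_scheme" +
  fixes H :: "'a set"
  assumes H: "subgroup H G"

sublocale hnn_ext \<subseteq> Gm: group "HNN_trivial G H"
  by (rule G.group_HNN_trivial)

lemma (in group) inv_commute:
  assumes x: "x \<in> carrier G" and y: "y \<in> carrier G" and c: "x \<otimes> y = y \<otimes> x"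
  shows "inv x \<otimes> y = y \<otimes> inv x"
proof -
  have "inv x \<otimes> y = inv x \<otimes> y \<otimes> (x \<otimes> inv x)" using x y by simp
  also have "\<dots> = inv x \<otimes> (y \<otimes> x) \<otimes> inv x" using x y by (simp add: m_assoc)
  also have "\<dots> = inv x \<otimes> (x \<otimes> y) \<otimes> inv x" using c by simp
  also have "\<dots> = y \<otimes> inv x" using x y by (simp add: m_assoc[symmetric])
  finally show ?thesis .
qed

lemma (in group) int_pow_commute:
  assumes x: "x \<in> carrier G" and y: "y \<in> carrier G" and c: "x \<otimes> y = y \<otimes> x"
  shows "x [^] (e::int) \<otimes> y = y \<otimes> x [^] e"
proof (cases e rule: int_cases)
  case (nonneg n)
  then show ?thesis using group_commutes_pow[OF c x y] by (simp add: int_pow_int)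
next
  case (neg n)
  have "x [^] (Suc n) \<otimes> y = y \<otimes> x [^] (Suc n)" using group_commutes_pow[OF c x y] .
  then have "inv (x [^] (Suc n)) \<otimes> y = y \<otimes> inv (x [^] (Suc n))"
    using inv_commute[OF _ y] x by simp
  moreover have "x [^] e = inv (x [^] (Suc n))" using neg int_pow_neg_int[OF x, of "Suc n"] by simp
  ultimately show ?thesis by simp
qed

context hnn_ext begin

definition emb :: "'a \<Rightarrow> ('a + bool) list set" where
  "emb g = hnn_rel G H `` {[Inl g]}"

definition stable :: "('a + bool) list set" where
  "stable = hnn_rel G H `` {[Inr True]}"

abbreviation "R \<equiv> hnn_rel G H"
abbreviation "Gam \<equiv> HNN_trivial G H"

lemma hnn_word_Inl: "g \<in> carrier G \<Longrightarrow> hnn_word G [Inl g]" by (simp add: hnn_word_def)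
lemma hnn_word_Inr: "hnn_word G [Inr b]" by (simp add: hnn_word_def)

lemma emb_closed[simp]: "g \<in> carrier G \<Longrightarrow> emb g \<in> carrier Gam"
  by (simp add: emb_def G.HNN_carrier quotientI hnn_word_def)

lemma stable_closed[simp]: "stable \<in> carrier Gam"
  by (simp add: stable_def G.HNN_carrier quotientI hnn_word_def)

lemma hnn_class_closed: "hnn_word G w \<Longrightarrow> R `` {w} \<in> carrier Gam"
  by (simp add: G.HNN_carrier quotientI)

lemma hnn_class_Cons: "hnn_word G (x # w) \<Longrightarrow> R `` {x # w} = R `` {[x]} \<otimes>\<^bsub>Gam\<^esub> R `` {w}"
  using G.HNN_mult_class[of "[x]" w H] by (simp add: hnn_word_def)

lemma emb_mult: "g \<in> carrier G \<Longrightarrow> h \<in> carrier G \<Longrightarrow> emb (g \<otimes>\<^bsub>G\<^esub> h) = emb g \<otimes>\<^bsub>Gam\<^esub> emb h"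
proof -
  assume g: "g \<in> carrier G" and h: "h \<in> carrier G"
  have "emb g \<otimes>\<^bsub>Gam\<^esub> emb h = R `` {[Inl g, Inl h]}"
    using G.HNN_mult_class[of "[Inl g]" "[Inl h]" H] g h by (simp add: emb_def hnn_word_def)
  also have "\<dots> = emb (g \<otimes>\<^bsub>G\<^esub> h)"
    unfolding emb_def using g h
    by (subst G.hnn_class_eq_iff) (auto simp: hnn_word_def intro: hnn_rel.mult)
  finally show ?thesis by simp
qed

lemma emb_one[simp]: "emb \<one>\<^bsub>G\<^esub> = \<one>\<^bsub>Gam\<^esub>"
  unfolding emb_def G.HNN_one
  by (subst G.hnn_class_eq_iff) (auto simp: hnn_word_def intro: hnn_rel.one)

lemma emb_inv: "g \<in> carrier G \<Longrightarrow> emb (inv\<^bsub>G\<^esub> g) = inv\<^bsub>Gam\<^esub> emb g"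
proof -
  assume g: "g \<in> carrier G"
  have "emb (inv\<^bsub>G\<^esub> g) \<otimes>\<^bsub>Gam\<^esub> emb g = \<one>\<^bsub>Gam\<^esub>"
    using g by (simp add: emb_mult[symmetric])
  then show ?thesis using g by (simp add: Gm.inv_equality)
qed

lemma hnn_class_inv_stable: "R `` {[Inr False]} = inv\<^bsub>Gam\<^esub> stable"
proof -
  have "R `` {[Inr False]} \<otimes>\<^bsub>Gam\<^esub> stable = R `` {[Inr False, Inr True]}"
    using G.HNN_mult_class[of "[Inr False]" "[Inr True]" H] by (simp add: stable_def hnn_word_def rangeI)
  also have "\<dots> = \<one>\<^bsub>Gam\<^esub>"
    unfolding G.HNN_one
    by (subst G.hnn_class_eq_iff) (auto simp: hnn_word_def intro: hnn_rel.t_inv2)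
  finally have e: "R `` {[Inr False]} \<otimes>\<^bsub>Gam\<^esub> stable = \<one>\<^bsub>Gam\<^esub>" .
  have "R `` {[Inr False]} \<in> carrier Gam" using hnn_class_closed[of "[Inr False]"] by (simp add: hnn_word_def rangeI)
  then show ?thesis using Gm.inv_equality[OF e] by simp
qed

lemma emb_stable_commute: "h \<in> H \<Longrightarrow> emb h \<otimes>\<^bsub>Gam\<^esub> stable = stable \<otimes>\<^bsub>Gam\<^esub> emb h"
proof -
  assume hH: "h \<in> H"
  have h: "h \<in> carrier G" using hH H subgroup.subset by blast
  have "R `` {[Inr False]} \<otimes>\<^bsub>Gam\<^esub> (emb h \<otimes>\<^bsub>Gam\<^esub> stable) = R `` {[Inr False, Inl h, Inr True]}"
    using h by (simp add: emb_def stable_def G.HNN_mult_class hnn_word_def rangeI)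
  then have "inv\<^bsub>Gam\<^esub> stable \<otimes>\<^bsub>Gam\<^esub> (emb h \<otimes>\<^bsub>Gam\<^esub> stable) = R `` {[Inr False, Inl h, Inr True]}"
    by (simp add: hnn_class_inv_stable)
  also have "\<dots> = emb h"
    unfolding emb_def using h hH
    by (subst G.hnn_class_eq_iff) (auto simp: hnn_word_def intro: hnn_rel.hnn)
  finally have "inv\<^bsub>Gam\<^esub> stable \<otimes>\<^bsub>Gam\<^esub> (emb h \<otimes>\<^bsub>Gam\<^esub> stable) = emb h" .
  then have "emb h = inv\<^bsub>Gam\<^esub> stable \<otimes>\<^bsub>Gam\<^esub> (emb h \<otimes>\<^bsub>Gam\<^esub> stable)" by simp
  then show ?thesis using Gm.inv_solve_left[of "emb h" stable "emb h \<otimes>\<^bsub>Gam\<^esub> stable"] h by simp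
qed

text \<open>The normal form \<open>c\<^sub>1 t\<^sup>a\<^sup>1 c\<^sub>1\<inverse> \<cdots> c\<^sub>n t\<^sup>a\<^sup>n c\<^sub>n\<inverse> g\<close>; only its existence is needed.\<close>

definition tconj :: "'a \<Rightarrow> int \<Rightarrow> ('a + bool) list set" where
  "tconj c a = emb c \<otimes>\<^bsub>Gam\<^esub> stable [^]\<^bsub>Gam\<^esub> a \<otimes>\<^bsub>Gam\<^esub> inv\<^bsub>Gam\<^esub> (emb c)"

fun tconj_prod :: "('a \<times> int) list \<Rightarrow> ('a + bool) list set" where
  "tconj_prod [] = \<one>\<^bsub>Gam\<^esub>"
| "tconj_prod (x # l) = tconj (fst x) (snd x) \<otimes>\<^bsub>Gam\<^esub> tconj_prod l"

fun reduced :: "('a \<times> int) list \<Rightarrow> bool" where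
  "reduced [] = True"
| "reduced (x # l) = (fst x \<in> carrier G \<and> snd x \<noteq> 0 \<and>
     (case l of [] \<Rightarrow> True | y # _ \<Rightarrow> inv\<^bsub>G\<^esub> (fst x) \<otimes>\<^bsub>G\<^esub> fst y \<notin> H) \<and> reduced l)"

lemma tconj_closed[simp]: "c \<in> carrier G \<Longrightarrow> tconj c a \<in> carrier Gam"
  by (simp add: tconj_def)

lemma reduced_carrier: "reduced l \<Longrightarrow> \<forall>x\<in>set l. fst x \<in> carrier G"
  by (induction l) auto

lemma tconj_prod_closed: "\<forall>x\<in>set l. fst x \<in> carrier G \<Longrightarrow> tconj_prod l \<in> carrier Gam"
  by (induction l) auto

lemma emb_mult_tconj:
  assumes x: "x \<in> carrier G" and c: "c \<in> carrier G"
  shows "emb x \<otimes>\<^bsub>Gam\<^esub> tconj c a = tconj (x \<otimes>\<^bsub>G\<^esub> c) a \<otimes>\<^bsub>Gam\<^esub> emb x"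
  using x c by (simp add: tconj_def emb_mult Gm.inv_mult_group Gm.m_assoc)

lemma tconj_one: "tconj \<one>\<^bsub>G\<^esub> e = stable [^]\<^bsub>Gam\<^esub> e"
  by (simp add: tconj_def)

lemma tconj_zero: "c \<in> carrier G \<Longrightarrow> tconj c 0 = \<one>\<^bsub>Gam\<^esub>"
  by (simp add: tconj_def)

lemma stable_pow_mult_tconj:
  assumes c: "c \<in> H"
  shows "stable [^]\<^bsub>Gam\<^esub> e \<otimes>\<^bsub>Gam\<^esub> tconj c a = tconj c (e + a)"
proof -
  have cG: "c \<in> carrier G" using c H subgroup.subset by blast
  have cm: "stable \<otimes>\<^bsub>Gam\<^esub> emb c = emb c \<otimes>\<^bsub>Gam\<^esub> stable" using emb_stable_commute[OF c] by simp
  have ce: "stable [^]\<^bsub>Gam\<^esub> e \<otimes>\<^bsub>Gam\<^esub> emb c = emb c \<otimes>\<^bsub>Gam\<^esub> stable [^]\<^bsub>Gam\<^esub> e"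
    using Gm.int_pow_commute[OF stable_closed emb_closed[OF cG] cm] .
  have "stable [^]\<^bsub>Gam\<^esub> e \<otimes>\<^bsub>Gam\<^esub> tconj c a
      = (stable [^]\<^bsub>Gam\<^esub> e \<otimes>\<^bsub>Gam\<^esub> emb c) \<otimes>\<^bsub>Gam\<^esub> stable [^]\<^bsub>Gam\<^esub> a \<otimes>\<^bsub>Gam\<^esub> inv\<^bsub>Gam\<^esub> (emb c)"
    using cG by (simp add: tconj_def Gm.m_assoc)
  also have "\<dots> = emb c \<otimes>\<^bsub>Gam\<^esub> (stable [^]\<^bsub>Gam\<^esub> e \<otimes>\<^bsub>Gam\<^esub> stable [^]\<^bsub>Gam\<^esub> a) \<otimes>\<^bsub>Gam\<^esub> inv\<^bsub>Gam\<^esub> (emb c)"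
    using cG by (simp add: ce Gm.m_assoc)
  also have "\<dots> = tconj c (e + a)"
    by (simp add: tconj_def Gm.int_pow_mult)
  finally show ?thesis .
qed

lemma emb_mult_tconj_prod:
  assumes x: "x \<in> carrier G" and l: "\<forall>y\<in>set l. fst y \<in> carrier G"
  shows "emb x \<otimes>\<^bsub>Gam\<^esub> tconj_prod l = tconj_prod (map (\<lambda>y. (x \<otimes>\<^bsub>G\<^esub> fst y, snd y)) l) \<otimes>\<^bsub>Gam\<^esub> emb x"
  using l
proof (induction l)
  case Nil then show ?case using x by simp
next
  case (Cons y l)
  have y: "fst y \<in> carrier G" and l: "\<forall>y\<in>set l. fst y \<in> carrier G" using Cons.prems by auto
  have l': "\<forall>z\<in>set (map (\<lambda>y. (x \<otimes>\<^bsub>G\<^esub> fst y, snd y)) l). fst z \<in> carrier G" using l x by auto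
  have "emb x \<otimes>\<^bsub>Gam\<^esub> tconj_prod (y # l) = (emb x \<otimes>\<^bsub>Gam\<^esub> tconj (fst y) (snd y)) \<otimes>\<^bsub>Gam\<^esub> tconj_prod l"
    using x y l by (simp add: Gm.m_assoc tconj_prod_closed)
  also have "\<dots> = tconj (x \<otimes>\<^bsub>G\<^esub> fst y) (snd y) \<otimes>\<^bsub>Gam\<^esub> (emb x \<otimes>\<^bsub>Gam\<^esub> tconj_prod l)"
    using x y l by (simp add: emb_mult_tconj Gm.m_assoc tconj_prod_closed)
  also have "\<dots> = tconj (x \<otimes>\<^bsub>G\<^esub> fst y) (snd y) \<otimes>\<^bsub>Gam\<^esub> (tconj_prod (map (\<lambda>y. (x \<otimes>\<^bsub>G\<^esub> fst y, snd y)) l) \<otimes>\<^bsub>Gam\<^esub> emb x)"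
    using Cons.IH[OF l] by simp
  also have "\<dots> = tconj_prod (map (\<lambda>y. (x \<otimes>\<^bsub>G\<^esub> fst y, snd y)) (y # l)) \<otimes>\<^bsub>Gam\<^esub> emb x"
    using x y l' by (simp add: Gm.m_assoc tconj_prod_closed)
  finally show ?case .
qed

lemma reduced_shift:
  assumes x: "x \<in> carrier G" and r: "reduced l"
  shows "reduced (map (\<lambda>y. (x \<otimes>\<^bsub>G\<^esub> fst y, snd y)) l)"
  using r
proof (induction l)
  case (Cons y l)
  have y: "fst y \<in> carrier G" using Cons.prems by simp
  show ?case
  proof (cases l)
    case Nil then show ?thesis using Cons x y by simp
  next
    case (Cons z l')
    have z: "fst z \<in> carrier G" using Cons.prems \<open>l = z # l'\<close> by auto
    have "inv\<^bsub>G\<^esub> (x \<otimes>\<^bsub>G\<^esub> fst y) \<otimes>\<^bsub>G\<^esub> (x \<otimes>\<^bsub>G\<^esub> fst z) = inv\<^bsub>G\<^esub> (fst y) \<otimes>\<^bsub>G\<^esub> fst z"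
      using x y z by (simp add: G.inv_mult_group G.m_assoc[symmetric]) (simp add: G.m_assoc)
    then show ?thesis using Cons.prems Cons.IH x y \<open>l = z # l'\<close> by auto
  qed
qed simp

lemma stable_pow_mult_reduced:
  fixes e :: int
  assumes r: "reduced l" and e: "e \<noteq> 0"
  shows "\<exists>l'. reduced l' \<and> stable [^]\<^bsub>Gam\<^esub> e \<otimes>\<^bsub>Gam\<^esub> tconj_prod l = tconj_prod l'"
proof (cases l)
  case Nil
  have "reduced [(\<one>\<^bsub>G\<^esub>, e)]" using e by simp
  moreover have "stable [^]\<^bsub>Gam\<^esub> e \<otimes>\<^bsub>Gam\<^esub> tconj_prod l = tconj_prod [(\<one>\<^bsub>G\<^esub>, e)]"
    using Nil by (simp add: tconj_one)
  ultimately show ?thesis by blast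
next
  case (Cons y rest)
  have yG: "fst y \<in> carrier G" and rr: "reduced rest" and ya: "snd y \<noteq> 0" using r Cons by auto
  have restG: "\<forall>z\<in>set rest. fst z \<in> carrier G" using reduced_carrier[OF rr] .
  show ?thesis
  proof (cases "fst y \<in> H")
    case True
    have eq: "stable [^]\<^bsub>Gam\<^esub> e \<otimes>\<^bsub>Gam\<^esub> tconj_prod l = tconj (fst y) (e + snd y) \<otimes>\<^bsub>Gam\<^esub> tconj_prod rest"
      using Cons yG restG by (simp add: Gm.m_assoc[symmetric] tconj_prod_closed stable_pow_mult_tconj[OF True])
    show ?thesis
    proof (cases "e + snd y = 0")
      case True
      then show ?thesis using eq yG restG rr by (intro exI[of _ rest]) (simp add: tconj_zero tconj_prod_closed)
    next
      case False
      have "reduced ((fst y, e + snd y) # rest)" using False r Cons by (cases rest) auto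
      then show ?thesis using eq Cons by (intro exI[of _ "(fst y, e + snd y) # rest"]) auto
    qed
  next
    case False
    have "reduced ((\<one>\<^bsub>G\<^esub>, e) # l)" using r e False yG Cons by simp
    moreover have "stable [^]\<^bsub>Gam\<^esub> e \<otimes>\<^bsub>Gam\<^esub> tconj_prod l = tconj_prod ((\<one>\<^bsub>G\<^esub>, e) # l)" by (simp add: tconj_one)
    ultimately show ?thesis by blast
  qed
qed

lemma hnn_normal_form:
  "hnn_word G w \<Longrightarrow> \<exists>l g. reduced l \<and> g \<in> carrier G \<and> R `` {w} = tconj_prod l \<otimes>\<^bsub>Gam\<^esub> emb g"
proof (induction w)
  case Nil
  then show ?case by (intro exI[of _ "[]"] exI[of _ "\<one>\<^bsub>G\<^esub>"]) (simp add: G.HNN_one[symmetric])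
next
  case (Cons x w)
  have w: "hnn_word G w" and x: "x \<in> Inl ` carrier G \<union> range Inr"
    using Cons.prems hnn_word_Cons by auto
  obtain l g where lg: "reduced l" "g \<in> carrier G" "R `` {w} = tconj_prod l \<otimes>\<^bsub>Gam\<^esub> emb g"
    using Cons.IH[OF w] by blast
  have lG: "\<forall>z\<in>set l. fst z \<in> carrier G" using reduced_carrier[OF lg(1)] .
  have cw: "R `` {x # w} = R `` {[x]} \<otimes>\<^bsub>Gam\<^esub> (tconj_prod l \<otimes>\<^bsub>Gam\<^esub> emb g)"
    using hnn_class_Cons[OF Cons.prems] lg(3) by simp
  show ?case
  proof (cases x)
    case (Inl a)
    then have a: "a \<in> carrier G" using x by auto
    have "R `` {x # w} = (emb a \<otimes>\<^bsub>Gam\<^esub> tconj_prod l) \<otimes>\<^bsub>Gam\<^esub> emb g"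
      using cw Inl a lg lG by (simp add: emb_def[symmetric] Gm.m_assoc tconj_prod_closed)
    also have "\<dots> = tconj_prod (map (\<lambda>y. (a \<otimes>\<^bsub>G\<^esub> fst y, snd y)) l) \<otimes>\<^bsub>Gam\<^esub> emb (a \<otimes>\<^bsub>G\<^esub> g)"
      using a lg lG by (simp add: emb_mult_tconj_prod Gm.m_assoc emb_mult tconj_prod_closed reduced_carrier reduced_shift)
    finally show ?thesis using reduced_shift[OF a lg(1)] a lg(2) by blast
  next
    case (Inr b)
    define e :: int where "e = (if b then 1 else -1)"
    have "R `` {[x]} = stable [^]\<^bsub>Gam\<^esub> e"
      using Inr by (cases b) (simp_all add: e_def stable_def[symmetric] hnn_class_inv_stable Gm.int_pow_neg)
    then have "R `` {x # w} = (stable [^]\<^bsub>Gam\<^esub> e \<otimes>\<^bsub>Gam\<^esub> tconj_prod l) \<otimes>\<^bsub>Gam\<^esub> emb g"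
      using cw lg lG by (simp add: Gm.m_assoc tconj_prod_closed)
    moreover obtain l' where "reduced l'" "stable [^]\<^bsub>Gam\<^esub> e \<otimes>\<^bsub>Gam\<^esub> tconj_prod l = tconj_prod l'"
      using stable_pow_mult_reduced[OF lg(1), of e] by (cases b) (auto simp: e_def)
    ultimately show ?thesis using lg(2) by auto
  qed
qed

lemma carrier_normal_form:
  assumes "\<gamma> \<in> carrier Gam"
  obtains l g where "reduced l" "g \<in> carrier G" "\<gamma> = tconj_prod l \<otimes>\<^bsub>Gam\<^esub> emb g"
proof -
  obtain w where "\<gamma> = R `` {w}" "hnn_word G w"
    using assms by (auto simp: G.HNN_carrier elim!: quotientE)
  then show ?thesis using hnn_normal_form that by blast
qed

lemma reduced_nth: "reduced l \<Longrightarrow> Suc j < length l \<Longrightarrow> inv\<^bsub>G\<^esub> (fst (l ! j)) \<otimes>\<^bsub>G\<^esub> fst (l ! Suc j) \<notin> H"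
proof (induction l arbitrary: j)
  case (Cons y l)
  show ?case
  proof (cases j)
    case 0
    then obtain z l' where "l = z # l'" using Cons.prems by (cases l) auto
    then show ?thesis using Cons.prems 0 by simp
  next
    case (Suc j')
    then show ?thesis using Cons by simp
  qed
qed simp

lemma reduced_prod_nonzero: "reduced l \<Longrightarrow> prod_list (map snd l) \<noteq> 0"
  by (induction l) auto

end

section \<open>A triangular permutation representation\<close>

lemma Bij_by_inverse:
  assumes "ff \<in> extensional S" "ff \<in> S \<rightarrow> S" "gg \<in> S \<rightarrow> S"
    "\<And>x. x \<in> S \<Longrightarrow> ff (gg x) = x" "\<And>x. x \<in> S \<Longrightarrow> gg (ff x) = x"
  shows "ff \<in> Bij S"
  unfolding Bij_def using assms by (auto intro!: bij_betw_byWitness[where f'=gg])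

lemma BijGroup_mult: "ff \<in> Bij S \<Longrightarrow> gg \<in> Bij S \<Longrightarrow> ff \<otimes>\<^bsub>BijGroup S\<^esub> gg = compose S ff gg"
  by (simp add: BijGroup_def)

lemma BijGroup_one: "\<one>\<^bsub>BijGroup S\<^esub> = (\<lambda>x\<in>S. x)"
  by (simp add: BijGroup_def)

lemma eq_if_mod_diff_eq:
  fixes a b c m :: int
  assumes "0 \<le> a" "a < m" "0 \<le> b" "b < m" "(a - c) mod m = (b - c) mod m"
  shows "a = b"
proof -
  have "(a - c + c) mod m = (b - c + c) mod m"
    using assms(5) by (metis mod_add_left_eq)
  then show ?thesis using assms by simp
qed

lemma BijGroup_carrier: "carrier (BijGroup S) = Bij S" by (simp add: BijGroup_def)

type_synonym 'a point = "'a set \<times> (nat \<Rightarrow> int)"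

text \<open>Points are pairs of a coset \<open>C \<in> G/N\<close> and a vector \<open>v \<in> {0..<m}\<^sup>r\<^sup>+\<^sup>1\<close>. The letter \<open>t\<close> adds
  \<open>v\<^sub>k\<^sub>-\<^sub>1\<close> to \<open>v\<^sub>k\<close> in every layer \<open>k \<ge> 1\<close> whose label is the double coset \<open>H C\<close>; since
  \<open>H (h C) = H C\<close> for \<open>h \<in> H\<close>, this commutes with the action of \<open>H\<close>.\<close>

locale hnn_perm = G: group G for G :: "('a, 'b) monoid_scheme" +
  fixes H N :: "'a set" and r :: nat and m :: int and lbl :: "nat \<Rightarrow> 'a set"
  assumes N_normal: "N \<lhd> G" and H_subgroup: "subgroup H G" and finite_Cos: "finite (rcosets\<^bsub>G\<^esub> N)" and m: "m > 1"
    and lbl_Suc_neq: "\<And>k. 1 \<le> k \<Longrightarrow> k < r \<Longrightarrow> lbl k \<noteq> lbl (Suc k)"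
begin

definition Cos :: "'a set set" where
  "Cos = rcosets\<^bsub>G\<^esub> N"
definition Vec :: "(nat \<Rightarrow> int) set" where
  "Vec = PiE {..r} (\<lambda>_. {0..<m})"
definition Om :: "'a point set" where
  "Om = Cos \<times> Vec"
definition dcoset :: "'a set \<Rightarrow> 'a set" where
  "dcoset C = H <#>\<^bsub>G\<^esub> C"
definition shear :: "'a set \<Rightarrow> int \<Rightarrow> (nat \<Rightarrow> int) \<Rightarrow> nat \<Rightarrow> int" where
  "shear y a v = (\<lambda>k\<in>{..r}. if 1 \<le> k \<and> lbl k = y then (v k + a * v (k - 1)) mod m else v k)"
definition tperm :: "int \<Rightarrow> 'a point \<Rightarrow> 'a point" where
  "tperm a = (\<lambda>\<omega>\<in>Om. (fst \<omega>, shear (dcoset (fst \<omega>)) a (snd \<omega>)))"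
definition gperm :: "'a \<Rightarrow> 'a point \<Rightarrow> 'a point" where
  "gperm x = (\<lambda>\<omega>\<in>Om. (x <#\<^bsub>G\<^esub> fst \<omega>, snd \<omega>))"
abbreviation "Q \<equiv> BijGroup Om"

lemma N_subgroup: "subgroup N G" using N_normal normal_imp_subgroup by blast

lemma Cos_subset: "C \<in> Cos \<Longrightarrow> C \<subseteq> carrier G"
  unfolding Cos_def using G.rcosets_part_G[OF N_subgroup] by blast

lemma l_coset_Cos: "C \<in> Cos \<Longrightarrow> x \<in> carrier G \<Longrightarrow> x <#\<^bsub>G\<^esub> C \<in> Cos"
proof -
  assume C: "C \<in> Cos" and x: "x \<in> carrier G"
  then obtain y where y: "y \<in> carrier G" "C = N #>\<^bsub>G\<^esub> y" by (auto simp: Cos_def RCOSETS_def)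
  have NG: "N \<subseteq> carrier G" using N_subgroup subgroup.subset by blast
  have "x <#\<^bsub>G\<^esub> C = ({x} <#>\<^bsub>G\<^esub> N) <#>\<^bsub>G\<^esub> {y}"
    using y x NG by (simp add: l_coset_eq_set_mult r_coset_eq_set_mult G.set_mult_assoc)
  also have "\<dots> = (N #>\<^bsub>G\<^esub> x) #>\<^bsub>G\<^esub> y"
    using normal.coset_eq[OF N_normal] x by (simp add: l_coset_eq_set_mult r_coset_eq_set_mult)
  also have "\<dots> = N #>\<^bsub>G\<^esub> (x \<otimes>\<^bsub>G\<^esub> y)" using G.coset_mult_assoc NG x y by simp
  finally show ?thesis using x y NG by (simp add: Cos_def G.rcosetsI)
qed

lemma l_coset_assoc: "C \<in> Cos \<Longrightarrow> x \<in> carrier G \<Longrightarrow> y \<in> carrier G \<Longrightarrow> x <#\<^bsub>G\<^esub> (y <#\<^bsub>G\<^esub> C) = (x \<otimes>\<^bsub>G\<^esub> y) <#\<^bsub>G\<^esub> C"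
  using G.lcos_m_assoc Cos_subset by blast

lemma l_coset_one: "C \<in> Cos \<Longrightarrow> \<one>\<^bsub>G\<^esub> <#\<^bsub>G\<^esub> C = C"
  using G.lcos_mult_one Cos_subset by blast

lemma shear_Vec: "v \<in> Vec \<Longrightarrow> shear y a v \<in> Vec"
  using m by (auto simp: shear_def Vec_def PiE_def Pi_def)

lemma Vec_range: "v \<in> Vec \<Longrightarrow> k \<le> r \<Longrightarrow> 0 \<le> v k \<and> v k < m"
  by (auto simp: Vec_def PiE_def Pi_def)

lemma shear_zero: "v \<in> Vec \<Longrightarrow> shear y 0 v = v"
proof -
  assume v: "v \<in> Vec"
  show ?thesis
  proof (rule ext)
    fix k show "shear y 0 v k = v k"
    proof (cases "k \<le> r")
      case True then show ?thesis using Vec_range[OF v True] by (simp add: shear_def)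
    next
      case False then show ?thesis using v by (simp add: shear_def Vec_def PiE_def extensional_def)
    qed
  qed
qed

text \<open>Adjacent layers carry different labels, so a shear never changes the coordinate it reads.\<close>

lemma shear_add: "v \<in> Vec \<Longrightarrow> shear y a (shear y b v) = shear y (a + b) v"
proof (rule ext)
  fix k assume v: "v \<in> Vec"
  show "shear y a (shear y b v) k = shear y (a + b) v k"
  proof (cases "k \<le> r \<and> 1 \<le> k \<and> lbl k = y")
    case True
    have k1: "k - 1 \<le> r" using True by linarith
    have prev: "shear y b v (k - 1) = v (k - 1)"
    proof (cases "k - 1 \<ge> 1")
      case True
      moreover have "k - 1 < r" using \<open>k \<le> r \<and> 1 \<le> k \<and> lbl k = y\<close> by linarith
      ultimately have "lbl (k - 1) \<noteq> lbl (Suc (k - 1))" using lbl_Suc_neq[of "k - 1"] by blast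
      then show ?thesis using \<open>k \<le> r \<and> 1 \<le> k \<and> lbl k = y\<close> True k1 by (simp add: shear_def)
    next
      case False then show ?thesis using \<open>k \<le> r \<and> 1 \<le> k \<and> lbl k = y\<close> k1 by (simp add: shear_def)
    qed
    have "shear y a (shear y b v) k = (shear y b v k + a * v (k - 1)) mod m" using True prev by (simp add: shear_def)
    also have "\<dots> = ((v k + b * v (k - 1)) mod m + a * v (k - 1)) mod m" using True by (simp add: shear_def)
    also have "\<dots> = (v k + b * v (k - 1) + a * v (k - 1)) mod m" by (rule mod_add_left_eq)
    also have "\<dots> = (v k + (a + b) * v (k - 1)) mod m" by (simp add: algebra_simps)
    finally show ?thesis using True by (simp add: shear_def)
  next
    case False then show ?thesis by (auto simp: shear_def)
  qed
qed

lemma Om_fst: "\<omega> \<in> Om \<Longrightarrow> fst \<omega> \<in> Cos" by (auto simp: Om_def)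
lemma Om_snd: "\<omega> \<in> Om \<Longrightarrow> snd \<omega> \<in> Vec" by (auto simp: Om_def)

lemma tperm_undefined: "\<omega> \<notin> Om \<Longrightarrow> tperm a \<omega> = undefined" by (simp add: tperm_def)
lemma gperm_undefined: "\<omega> \<notin> Om \<Longrightarrow> gperm x \<omega> = undefined" by (simp add: gperm_def)

lemma tperm_Om: "\<omega> \<in> Om \<Longrightarrow> tperm a \<omega> \<in> Om"
  by (auto simp: tperm_def Om_def shear_Vec)

lemma tperm_tperm: "\<omega> \<in> Om \<Longrightarrow> tperm a (tperm b \<omega>) = tperm (a + b) \<omega>"
  using tperm_Om by (auto simp: tperm_def Om_def shear_Vec shear_add)

lemma tperm_zero: "\<omega> \<in> Om \<Longrightarrow> tperm 0 \<omega> = \<omega>"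
  by (auto simp: tperm_def Om_def shear_zero)

lemma tperm_extensional: "tperm a \<in> extensional Om" by (simp add: tperm_def)
lemma gperm_extensional: "gperm a \<in> extensional Om" by (simp add: gperm_def)

lemma tperm_Bij: "tperm a \<in> Bij Om"
  by (rule Bij_by_inverse[where gg="tperm (-a)"]) (auto simp: tperm_extensional tperm_Om tperm_tperm tperm_zero)

lemma gperm_Om: "\<omega> \<in> Om \<Longrightarrow> x \<in> carrier G \<Longrightarrow> gperm x \<omega> \<in> Om"
  by (auto simp: gperm_def Om_def l_coset_Cos)

lemma gperm_gperm: "\<omega> \<in> Om \<Longrightarrow> x \<in> carrier G \<Longrightarrow> y \<in> carrier G \<Longrightarrow> gperm x (gperm y \<omega>) = gperm (x \<otimes>\<^bsub>G\<^esub> y) \<omega>"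
  using gperm_Om by (auto simp: gperm_def Om_def l_coset_assoc l_coset_Cos)

lemma gperm_one: "\<omega> \<in> Om \<Longrightarrow> gperm \<one>\<^bsub>G\<^esub> \<omega> = \<omega>"
  by (auto simp: gperm_def Om_def l_coset_one)

lemma gperm_Bij: "x \<in> carrier G \<Longrightarrow> gperm x \<in> Bij Om"
  by (rule Bij_by_inverse[where gg="gperm (inv\<^bsub>G\<^esub> x)"]) (auto simp: gperm_extensional gperm_Om gperm_gperm gperm_one)

lemma group_Q: "group Q" by (rule group_BijGroup)

lemma gperm_hom: "gperm \<in> hom G Q"
proof (rule homI)
  fix x assume "x \<in> carrier G" then show "gperm x \<in> carrier Q" by (simp add: BijGroup_def gperm_Bij)
next
  fix x y assume x: "x \<in> carrier G" and y: "y \<in> carrier G"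
  show "gperm (x \<otimes>\<^bsub>G\<^esub> y) = gperm x \<otimes>\<^bsub>Q\<^esub> gperm y"
    using x y by (simp add: BijGroup_mult gperm_Bij) (rule ext, auto simp: compose_def gperm_gperm gperm_undefined)
qed

lemma tperm_mult: "tperm a \<otimes>\<^bsub>Q\<^esub> tperm b = tperm (a + b)"
  by (simp add: BijGroup_mult tperm_Bij) (rule ext, auto simp: compose_def tperm_tperm tperm_undefined)

lemma tperm_one: "tperm 0 = \<one>\<^bsub>Q\<^esub>"
  by (simp add: BijGroup_one) (rule ext, auto simp: tperm_zero tperm_undefined)

lemma tperm_carrier: "tperm a \<in> carrier Q" by (simp add: BijGroup_def tperm_Bij)

lemma tperm_pow: "tperm 1 [^]\<^bsub>Q\<^esub> (a::int) = tperm a"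
proof -
  have nat: "tperm 1 [^]\<^bsub>Q\<^esub> (n::nat) = tperm (int n)" for n
    by (induction n) (simp_all add: tperm_one tperm_mult add.commute)
  show ?thesis
  proof (cases a rule: int_cases)
    case (nonneg n) then show ?thesis using nat by (simp add: int_pow_int)
  next
    case (neg n)
    have "tperm (- int (Suc n)) \<otimes>\<^bsub>Q\<^esub> tperm (int (Suc n)) = \<one>\<^bsub>Q\<^esub>" by (simp add: tperm_mult tperm_one)
    then have "inv\<^bsub>Q\<^esub> (tperm (int (Suc n))) = tperm (- int (Suc n))"
      using group.inv_equality[OF group_Q] tperm_carrier by blast
    moreover have "tperm 1 [^]\<^bsub>Q\<^esub> a = inv\<^bsub>Q\<^esub> (tperm 1 [^]\<^bsub>Q\<^esub> (Suc n))"
      unfolding neg by (rule group.int_pow_neg_int[OF group_Q tperm_carrier])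
    ultimately show ?thesis using neg by (simp only: nat)
  qed
qed

lemma dcoset_l_coset: "C \<in> Cos \<Longrightarrow> h \<in> H \<Longrightarrow> dcoset (h <#\<^bsub>G\<^esub> C) = dcoset C"
proof -
  assume C: "C \<in> Cos" and h: "h \<in> H"
  have hG: "h \<in> carrier G" using h H_subgroup subgroup.subset by blast
  have HG: "H \<subseteq> carrier G" using H_subgroup subgroup.subset by blast
  have "H <#>\<^bsub>G\<^esub> (h <#\<^bsub>G\<^esub> C) = (H #>\<^bsub>G\<^esub> h) <#>\<^bsub>G\<^esub> C"
    using G.rcos_assoc_lcos[OF HG Cos_subset[OF C] hG] by simp
  also have "H #>\<^bsub>G\<^esub> h = H" using subgroup.rcos_const[OF H_subgroup G.group_axioms h] .
  finally show ?thesis by (simp add: dcoset_def)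
qed

lemma gperm_tperm_commute: "h \<in> H \<Longrightarrow> h \<in> carrier G \<Longrightarrow> gperm h \<otimes>\<^bsub>Q\<^esub> tperm 1 = tperm 1 \<otimes>\<^bsub>Q\<^esub> gperm h"
  by (simp add: BijGroup_mult gperm_Bij tperm_Bij)
     (rule ext, auto simp: compose_def tperm_Om gperm_Om tperm_def gperm_def dcoset_l_coset Om_def l_coset_Cos shear_Vec)

lemma hnn_rep_perm: "hnn_rep G Q H gperm (tperm 1)"
  unfolding hnn_rep_def hnn_rep_axioms_def using G.group_axioms group_Q gperm_hom tperm_carrier gperm_tperm_commute by blast

text \<open>The image of \<open>\<Gamma>\<close> consists of permutations lying over a left multiplication on \<open>G/N\<close> that
  change the \<open>k\<close>-th coordinate, mod \<open>m\<close>, by an amount depending only on the lower coordinates. The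
  \<open>|G:N|\<close>-th power of such a permutation fixes every coset, and every further \<open>m\<close>-th power fixes one
  more layer.\<close>

definition triangular :: "('a point \<Rightarrow> 'a point) \<Rightarrow> bool" where
  "triangular Xf \<longleftrightarrow> (\<forall>C v v' k. C \<in> Cos \<longrightarrow> v \<in> Vec \<longrightarrow> v' \<in> Vec \<longrightarrow> k \<le> r \<longrightarrow> (\<forall>i<k. v i = v' i) \<longrightarrow>
   (snd (Xf (C, v)) k - v k) mod m = (snd (Xf (C, v')) k - v' k) mod m)"

lemma triangularD: "triangular Xf \<Longrightarrow> C \<in> Cos \<Longrightarrow> v \<in> Vec \<Longrightarrow> v' \<in> Vec \<Longrightarrow> k \<le> r \<Longrightarrow> (\<forall>i<k. v i = v' i) \<Longrightarrow>
   (snd (Xf (C, v)) k - v k) mod m = (snd (Xf (C, v')) k - v' k) mod m"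
  unfolding triangular_def by blast

definition lies_over :: "('a point \<Rightarrow> 'a point) \<Rightarrow> 'a \<Rightarrow> bool" where
  "lies_over Xf x \<longleftrightarrow> Xf \<in> Bij Om \<and> x \<in> carrier G \<and> (\<forall>\<omega>\<in>Om. fst (Xf \<omega>) = x <#\<^bsub>G\<^esub> fst \<omega>) \<and> triangular Xf"

lemma Bij_mem: "Xf \<in> Bij Om \<Longrightarrow> \<omega> \<in> Om \<Longrightarrow> Xf \<omega> \<in> Om"
  using Bij_imp_funcset by blast

lemma triangular_prefix:
  assumes Xf: "Xf \<in> Bij Om" and t: "triangular Xf" and C: "C \<in> Cos" and v: "v \<in> Vec" and v': "v' \<in> Vec"
    and fs: "fst (Xf (C, v)) = fst (Xf (C, v'))"
  shows "(\<forall>i<k. v i = v' i) \<Longrightarrow> (\<forall>i<k. snd (Xf (C, v)) i = snd (Xf (C, v')) i)"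
proof (induction k)
  case (Suc k)
  then have IH: "\<forall>i<k. snd (Xf (C, v)) i = snd (Xf (C, v')) i" by simp
  have "Xf (C, v) \<in> Om" "Xf (C, v') \<in> Om" using Bij_mem[OF Xf] C v v' by (simp_all add: Om_def)
  then have w: "snd (Xf (C, v)) \<in> Vec" "snd (Xf (C, v')) \<in> Vec" using Om_snd by blast+
  show ?case
  proof (intro allI impI)
    fix i assume "i < Suc k"
    show "snd (Xf (C, v)) i = snd (Xf (C, v')) i"
    proof (cases "i < k")
      case True then show ?thesis using IH by blast
    next
      case False
      then have ik: "i = k" using \<open>i < Suc k\<close> by simp
      show ?thesis
      proof (cases "k \<le> r")
        case True
        have "(snd (Xf (C, v)) k - v k) mod m = (snd (Xf (C, v')) k - v' k) mod m"
          using triangularD[OF t C v v' True] Suc.prems by simp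
        moreover have "v k = v' k" using Suc.prems by simp
        ultimately show ?thesis using ik eq_if_mod_diff_eq Vec_range[OF w(1) True] Vec_range[OF w(2) True] by metis
      next
        case False
        then show ?thesis using w ik by (auto simp: Vec_def PiE_def extensional_def)
      qed
    qed
  qed
qed simp

lemma lies_over_mult:
  assumes Xf: "lies_over Xf x" and Yf: "lies_over Yf y"
  shows "lies_over (Xf \<otimes>\<^bsub>Q\<^esub> Yf) (x \<otimes>\<^bsub>G\<^esub> y)"
proof -
  have XB: "Xf \<in> Bij Om" and YB: "Yf \<in> Bij Om" and x: "x \<in> carrier G" and y: "y \<in> carrier G"
    and Xf: "\<forall>\<omega>\<in>Om. fst (Xf \<omega>) = x <#\<^bsub>G\<^esub> fst \<omega>" and Yf: "\<forall>\<omega>\<in>Om. fst (Yf \<omega>) = y <#\<^bsub>G\<^esub> fst \<omega>"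
    and Xt: "triangular Xf" and Yt: "triangular Yf" using Xf Yf by (auto simp: lies_over_def)
  have eq: "Xf \<otimes>\<^bsub>Q\<^esub> Yf = compose Om Xf Yf" using XB YB by (simp add: BijGroup_mult)
  have B: "compose Om Xf Yf \<in> Bij Om" using XB YB compose_Bij by blast
  have F: "\<forall>\<omega>\<in>Om. fst (compose Om Xf Yf \<omega>) = (x \<otimes>\<^bsub>G\<^esub> y) <#\<^bsub>G\<^esub> fst \<omega>"
    using Xf Yf Bij_mem[OF YB] x y l_coset_assoc Om_fst by (auto simp: compose_def)
  have T: "triangular (compose Om Xf Yf)"
    unfolding triangular_def
  proof (intro allI impI)
    fix C v v' k assume C: "C \<in> Cos" and v: "v \<in> Vec" and v': "v' \<in> Vec" and k: "k \<le> r" and agree: "\<forall>i<k. v i = v' i"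
    define w where "w = snd (Yf (C, v))"
    define w' where "w' = snd (Yf (C, v'))"
    have o1: "(C, v) \<in> Om" "(C, v') \<in> Om" using C v v' by (auto simp: Om_def)
    have fy: "fst (Yf (C, v)) = y <#\<^bsub>G\<^esub> C" "fst (Yf (C, v')) = y <#\<^bsub>G\<^esub> C" using Yf o1 by auto
    have Yeq: "Yf (C, v) = (y <#\<^bsub>G\<^esub> C, w)" "Yf (C, v') = (y <#\<^bsub>G\<^esub> C, w')"
      using fy by (auto simp: w_def w'_def prod_eq_iff)
    have yC: "y <#\<^bsub>G\<^esub> C \<in> Cos" using l_coset_Cos[OF C y] .
    have wV: "w \<in> Vec" "w' \<in> Vec" using Bij_mem[OF YB o1(1)] Bij_mem[OF YB o1(2)] Yeq by (auto simp: Om_def)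
    have wa: "\<forall>i<k. w i = w' i" using triangular_prefix[OF YB Yt C v v', of k] fy agree by (simp add: w_def w'_def)
    have d1: "(snd (Xf (y <#\<^bsub>G\<^esub> C, w)) k - w k) mod m = (snd (Xf (y <#\<^bsub>G\<^esub> C, w')) k - w' k) mod m"
      using triangularD[OF Xt yC wV k wa] .
    have d2: "(w k - v k) mod m = (w' k - v' k) mod m"
      using triangularD[OF Yt C v v' k agree] by (simp add: w_def w'_def)
    have "(snd (Xf (y <#\<^bsub>G\<^esub> C, w)) k - v k) mod m
        = ((snd (Xf (y <#\<^bsub>G\<^esub> C, w)) k - w k) mod m + (w k - v k) mod m) mod m"
      by (simp add: mod_add_eq)
    also have "\<dots> = ((snd (Xf (y <#\<^bsub>G\<^esub> C, w')) k - w' k) mod m + (w' k - v' k) mod m) mod m"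
      using d1 d2 by simp
    also have "\<dots> = (snd (Xf (y <#\<^bsub>G\<^esub> C, w')) k - v' k) mod m"
      by (simp add: mod_add_eq)
    finally show "(snd (compose Om Xf Yf (C, v)) k - v k) mod m = (snd (compose Om Xf Yf (C, v')) k - v' k) mod m"
      using o1 Yeq by (simp add: compose_def)
  qed
  show ?thesis using eq B F T x y by (simp add: lies_over_def)
qed

lemma lies_over_one: "lies_over \<one>\<^bsub>Q\<^esub> \<one>\<^bsub>G\<^esub>"
  by (auto simp: lies_over_def BijGroup_one id_Bij l_coset_one Om_def triangular_def)

lemma lies_over_gperm: "x \<in> carrier G \<Longrightarrow> lies_over (gperm x) x"
proof -
  assume x: "x \<in> carrier G"
  have "gperm x \<in> Bij Om" using gperm_Bij[OF x] .
  moreover have "\<forall>\<omega>\<in>Om. fst (gperm x \<omega>) = x <#\<^bsub>G\<^esub> fst \<omega>" by (simp add: gperm_def)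
  moreover have "triangular (gperm x)" by (auto simp: triangular_def gperm_def Om_def)
  ultimately show ?thesis using x by (simp add: lies_over_def)
qed

lemma lies_over_tperm: "lies_over (tperm a) \<one>\<^bsub>G\<^esub>"
proof -
  have "triangular (tperm a)"
    unfolding triangular_def
  proof (intro allI impI)
    fix C v v' k assume C: "C \<in> Cos" and v: "v \<in> Vec" and v': "v' \<in> Vec" and k: "k \<le> r" and agree: "\<forall>i<k. v i = v' i"
    have o1: "(C, v) \<in> Om" "(C, v') \<in> Om" using C v v' by (auto simp: Om_def)
    show "(snd (tperm a (C, v)) k - v k) mod m = (snd (tperm a (C, v')) k - v' k) mod m"
    proof (cases "1 \<le> k \<and> lbl k = dcoset C")
      case True
      have "v (k - 1) = v' (k - 1)" using agree True by simp
      moreover have "(snd (tperm a (C, v)) k - v k) mod m = (a * v (k - 1)) mod m"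
        using o1 True k by (simp add: tperm_def shear_def mod_diff_left_eq)
      moreover have "(snd (tperm a (C, v')) k - v' k) mod m = (a * v' (k - 1)) mod m"
        using o1 True k by (simp add: tperm_def shear_def mod_diff_left_eq)
      ultimately show ?thesis by simp
    next
      case False
      then show ?thesis using o1 k by (auto simp: tperm_def shear_def)
    qed
  qed
  moreover have "tperm a \<in> Bij Om" by (rule tperm_Bij)
  moreover have "\<forall>\<omega>\<in>Om. fst (tperm a \<omega>) = \<one>\<^bsub>G\<^esub> <#\<^bsub>G\<^esub> fst \<omega>" by (simp add: tperm_def l_coset_one Om_fst)
  ultimately show ?thesis by (simp add: lies_over_def)
qed

lemma lies_over_pow: "lies_over Xf x \<Longrightarrow> lies_over (Xf [^]\<^bsub>Q\<^esub> (n::nat)) (x [^]\<^bsub>G\<^esub> n)"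
proof (induction n)
  case 0 then show ?case using lies_over_one by simp
next
  case (Suc n)
  then show ?case using lies_over_mult[OF Suc.IH[OF Suc.prems] Suc.prems] by simp
qed

lemma lies_over_Bij: "lies_over Xf x \<Longrightarrow> Xf \<in> Bij Om" by (simp add: lies_over_def)

lemma Q_pow_Suc_apply: "Xf \<in> Bij Om \<Longrightarrow> \<omega> \<in> Om \<Longrightarrow> (Xf [^]\<^bsub>Q\<^esub> (Suc n)) \<omega> = (Xf [^]\<^bsub>Q\<^esub> n) (Xf \<omega>)"
proof -
  assume Xf: "Xf \<in> Bij Om" and w: "\<omega> \<in> Om"
  have "Xf \<in> carrier Q" using Xf by (simp only: BijGroup_carrier)
  then have "Xf [^]\<^bsub>Q\<^esub> n \<in> carrier Q" by (rule monoid.nat_pow_closed[OF group.is_monoid[OF group_Q]])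
  then have XB: "Xf [^]\<^bsub>Q\<^esub> n \<in> Bij Om" by (simp only: BijGroup_carrier)
  have "Xf [^]\<^bsub>Q\<^esub> (Suc n) = Xf [^]\<^bsub>Q\<^esub> n \<otimes>\<^bsub>Q\<^esub> Xf" by (rule monoid.nat_pow_Suc[OF group.is_monoid[OF group_Q]])
  also have "\<dots> = compose Om (Xf [^]\<^bsub>Q\<^esub> n) Xf" using XB Xf by (rule BijGroup_mult)
  finally show ?thesis using w by (simp add: compose_def)
qed

definition fixes_prefix :: "nat \<Rightarrow> ('a point \<Rightarrow> 'a point) \<Rightarrow> bool" where
  "fixes_prefix j Zf \<longleftrightarrow> (\<forall>\<omega>\<in>Om. fst (Zf \<omega>) = fst \<omega> \<and> (\<forall>i<j. snd (Zf \<omega>) i = snd \<omega> i))"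

lemma fixes_prefix_pow:
  assumes Zf: "lies_over Zf z" and f: "fixes_prefix j Zf"
  shows "fixes_prefix j (Zf [^]\<^bsub>Q\<^esub> (n::nat))"
proof (induction n)
  case 0 then show ?case by (simp add: fixes_prefix_def BijGroup_one)
next
  case (Suc n)
  have ZB: "Zf \<in> Bij Om" using Zf lies_over_Bij by blast
  show ?case unfolding fixes_prefix_def
  proof
    fix \<omega> assume w: "\<omega> \<in> Om"
    have "Zf \<omega> \<in> Om" using Bij_mem[OF ZB w] .
    then show "fst ((Zf [^]\<^bsub>Q\<^esub> Suc n) \<omega>) = fst \<omega> \<and> (\<forall>i<j. snd ((Zf [^]\<^bsub>Q\<^esub> Suc n) \<omega>) i = snd \<omega> i)"
      using Suc.IH f w Q_pow_Suc_apply[OF ZB w, of n] by (simp add: fixes_prefix_def)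
  qed
qed

lemma fixes_prefix_step_const:
  assumes Zf: "lies_over Zf z" and f: "fixes_prefix j Zf" and j: "j \<le> r" and w: "\<omega> \<in> Om"
  shows "(snd (Zf (Zf \<omega>)) j - snd (Zf \<omega>) j) mod m = (snd (Zf \<omega>) j - snd \<omega> j) mod m"
proof -
  have ZB: "Zf \<in> Bij Om" and Zt: "triangular Zf" using Zf by (auto simp: lies_over_def)
  obtain C v where Cv: "\<omega> = (C, v)" "C \<in> Cos" "v \<in> Vec" using w by (auto simp: Om_def)
  have Zw: "Zf \<omega> \<in> Om" using Bij_mem[OF ZB w] .
  define v1 where "v1 = snd (Zf \<omega>)"
  have "fst (Zf \<omega>) = C" "\<forall>i<j. v1 i = v i" using f w Cv by (auto simp: fixes_prefix_def v1_def)
  then have v1: "Zf \<omega> = (C, v1)" "v1 \<in> Vec" "\<forall>i<j. v1 i = v i"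
    using Om_snd[OF Zw] by (auto simp: v1_def prod_eq_iff)
  have "(snd (Zf (C, v1)) j - v1 j) mod m = (snd (Zf (C, v)) j - v j) mod m"
    using triangularD[OF Zt Cv(2) v1(2) Cv(3) j] v1(3) by simp
  then show ?thesis using v1(1) Cv(1) by simp
qed

lemma fixes_prefix_pow_coordinate:
  assumes Zf: "lies_over Zf z" and f: "fixes_prefix j Zf" and j: "j \<le> r" and w: "\<omega> \<in> Om"
  shows "(snd ((Zf [^]\<^bsub>Q\<^esub> (n::nat)) \<omega>) j - snd \<omega> j) mod m = (int n * (snd (Zf \<omega>) j - snd \<omega> j)) mod m"
  using w
proof (induction n arbitrary: \<omega>)
  case 0 then show ?case by (simp add: BijGroup_one)
next
  case (Suc n)
  have ZB: "Zf \<in> Bij Om" using Zf by (simp add: lies_over_def)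
  have Zw: "Zf \<omega> \<in> Om" using Bij_mem[OF ZB Suc.prems] .
  define d where "d = snd (Zf \<omega>) j - snd \<omega> j"
  have "(snd ((Zf [^]\<^bsub>Q\<^esub> Suc n) \<omega>) j - snd \<omega> j) mod m
      = ((snd ((Zf [^]\<^bsub>Q\<^esub> n) (Zf \<omega>)) j - snd (Zf \<omega>) j) + d) mod m"
    using Q_pow_Suc_apply[OF ZB Suc.prems] by (simp add: d_def)
  also have "\<dots> = ((snd ((Zf [^]\<^bsub>Q\<^esub> n) (Zf \<omega>)) j - snd (Zf \<omega>) j) mod m + d) mod m"
    by (simp add: mod_add_left_eq)
  also have "\<dots> = ((int n * (snd (Zf (Zf \<omega>)) j - snd (Zf \<omega>) j)) mod m + d) mod m"
    using Suc.IH[OF Zw] by simp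
  also have "\<dots> = ((int n * d) mod m + d) mod m"
    using fixes_prefix_step_const[OF Zf f j Suc.prems] by (metis d_def mod_mult_right_eq)
  also have "\<dots> = (int n * d + d) mod m" by (rule mod_add_left_eq)
  also have "\<dots> = (int (Suc n) * d) mod m" by (simp add: algebra_simps)
  finally show ?case by (simp add: d_def)
qed

lemma fixes_prefix_Suc_pow:
  assumes Zf: "lies_over Zf z" and f: "fixes_prefix j Zf" and j: "j \<le> r"
  shows "fixes_prefix (Suc j) (Zf [^]\<^bsub>Q\<^esub> (nat m))"
proof -
  have fp: "fixes_prefix j (Zf [^]\<^bsub>Q\<^esub> nat m)" using fixes_prefix_pow[OF Zf f] .
  show ?thesis unfolding fixes_prefix_def
  proof
    fix \<omega> assume w: "\<omega> \<in> Om"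
    have W: "(Zf [^]\<^bsub>Q\<^esub> nat m) \<omega> \<in> Om"
      using Bij_mem[OF lies_over_Bij[OF lies_over_pow[OF Zf]] w] .
    have "(snd ((Zf [^]\<^bsub>Q\<^esub> nat m) \<omega>) j - snd \<omega> j) mod m = 0"
      using fixes_prefix_pow_coordinate[OF Zf f j w, of "nat m"] m by simp
    moreover have "0 \<le> snd ((Zf [^]\<^bsub>Q\<^esub> nat m) \<omega>) j \<and> snd ((Zf [^]\<^bsub>Q\<^esub> nat m) \<omega>) j < m"
      using Vec_range[OF Om_snd[OF W] j] .
    moreover have "0 \<le> snd \<omega> j \<and> snd \<omega> j < m" using Vec_range[OF Om_snd[OF w] j] .
    ultimately have "snd ((Zf [^]\<^bsub>Q\<^esub> nat m) \<omega>) j = snd \<omega> j"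
      using eq_if_mod_diff_eq[of "snd ((Zf [^]\<^bsub>Q\<^esub> nat m) \<omega>) j" m "snd \<omega> j" "snd \<omega> j"] by simp
    then show "fst ((Zf [^]\<^bsub>Q\<^esub> nat m) \<omega>) = fst \<omega> \<and> (\<forall>i<Suc j. snd ((Zf [^]\<^bsub>Q\<^esub> nat m) \<omega>) i = snd \<omega> i)"
      using fp w by (auto simp: fixes_prefix_def less_Suc_eq)
  qed
qed

lemma pow_card_Cos_in_N: "x \<in> carrier G \<Longrightarrow> x [^]\<^bsub>G\<^esub> card Cos \<in> N"
proof -
  assume x: "x \<in> carrier G"
  have gF: "group (G Mod N)" using normal.factorgroup_is_group[OF N_normal] .
  have xc: "N #>\<^bsub>G\<^esub> x \<in> carrier (G Mod N)" using x by (simp add: FactGroup_def RCOSETS_def) blast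
  have "(N #>\<^bsub>G\<^esub> x) [^]\<^bsub>G Mod N\<^esub> order (G Mod N) = \<one>\<^bsub>G Mod N\<^esub>"
    using group.pow_order_eq_1[OF gF xc] .
  moreover have "order (G Mod N) = card Cos" by (simp add: order_def FactGroup_def Cos_def)
  ultimately have "N #>\<^bsub>G\<^esub> (x [^]\<^bsub>G\<^esub> card Cos) = N"
    using normal.FactGroup_pow[OF N_normal x] by simp
  then show ?thesis using G.coset_join1[OF _ _ N_subgroup] x by simp
qed

lemma l_coset_N: "C \<in> Cos \<Longrightarrow> x \<in> N \<Longrightarrow> x <#\<^bsub>G\<^esub> C = C"
proof -
  assume C: "C \<in> Cos" and xN: "x \<in> N"
  have NG: "N \<subseteq> carrier G" using N_subgroup subgroup.subset by blast
  have x: "x \<in> carrier G" using xN NG by blast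
  obtain y where y: "y \<in> carrier G" "C = N #>\<^bsub>G\<^esub> y" using C by (auto simp: Cos_def RCOSETS_def)
  have "x <#\<^bsub>G\<^esub> C = ({x} <#>\<^bsub>G\<^esub> N) <#>\<^bsub>G\<^esub> {y}"
    using y x NG by (simp add: l_coset_eq_set_mult r_coset_eq_set_mult G.set_mult_assoc)
  also have "\<dots> = (x <#\<^bsub>G\<^esub> N) #>\<^bsub>G\<^esub> y" by (simp add: l_coset_eq_set_mult r_coset_eq_set_mult)
  also have "x <#\<^bsub>G\<^esub> N = N" using G.coset_join3[OF x N_subgroup xN] .
  finally show ?thesis using y by simp
qed

lemma fixes_prefix_eq_one: "Wf \<in> Bij Om \<Longrightarrow> fixes_prefix (Suc r) Wf \<Longrightarrow> Wf = \<one>\<^bsub>Q\<^esub>"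
proof -
  assume W: "Wf \<in> Bij Om" and f: "fixes_prefix (Suc r) Wf"
  show ?thesis
  proof (rule ext)
    fix \<omega>
    show "Wf \<omega> = \<one>\<^bsub>Q\<^esub> \<omega>"
    proof (cases "\<omega> \<in> Om")
      case True
      have W1: "Wf \<omega> \<in> Om" using Bij_mem[OF W True] .
      have s: "snd (Wf \<omega>) = snd \<omega>"
      proof (rule ext)
        fix i show "snd (Wf \<omega>) i = snd \<omega> i"
        proof (cases "i \<le> r")
          case True then show ?thesis using f \<open>\<omega> \<in> Om\<close> by (auto simp: fixes_prefix_def)
        next
          case False then show ?thesis using Om_snd[OF W1] Om_snd[OF \<open>\<omega> \<in> Om\<close>]
            by (auto simp: Vec_def PiE_def extensional_def)
        qed
      qed
      have "fst (Wf \<omega>) = fst \<omega>" using f True by (auto simp: fixes_prefix_def)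
      then show ?thesis using s True by (simp add: BijGroup_one prod_eq_iff)
    next
      case False
      then show ?thesis using W by (cases \<omega>) (auto simp: BijGroup_one Bij_def extensional_def)
    qed
  qed
qed

lemma lies_over_exponent: "lies_over Xf x \<Longrightarrow> Xf [^]\<^bsub>Q\<^esub> (card Cos * nat m ^ Suc r) = \<one>\<^bsub>Q\<^esub>"
proof -
  assume X: "lies_over Xf x"
  define Yf where "Yf = Xf [^]\<^bsub>Q\<^esub> card Cos"
  have xG: "x \<in> carrier G" using X by (simp add: lies_over_def)
  have Yg: "lies_over Yf (x [^]\<^bsub>G\<^esub> card Cos)" using lies_over_pow[OF X] by (simp add: Yf_def)
  have xN: "x [^]\<^bsub>G\<^esub> card Cos \<in> N" using pow_card_Cos_in_N[OF xG] .
  have f0: "fixes_prefix 0 Yf" using Yg xN l_coset_N Om_fst by (auto simp: fixes_prefix_def lies_over_def)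
  have XQ: "Xf \<in> carrier Q" using X by (simp add: lies_over_def BijGroup_carrier)
  have YQ: "Yf \<in> carrier Q" using Yg by (simp add: lies_over_def BijGroup_carrier)
  have h: "j \<le> Suc r \<Longrightarrow> fixes_prefix j (Yf [^]\<^bsub>Q\<^esub> (nat m ^ j))" for j
  proof (induction j)
    case 0 then show ?case using f0 monoid.nat_pow_eone[OF group.is_monoid[OF group_Q] YQ] by simp
  next
    case (Suc j)
    have IH: "fixes_prefix j (Yf [^]\<^bsub>Q\<^esub> (nat m ^ j))" using Suc by simp
    have gZ: "lies_over (Yf [^]\<^bsub>Q\<^esub> (nat m ^ j)) ((x [^]\<^bsub>G\<^esub> card Cos) [^]\<^bsub>G\<^esub> (nat m ^ j))"
      using lies_over_pow[OF Yg] .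
    have "fixes_prefix (Suc j) ((Yf [^]\<^bsub>Q\<^esub> (nat m ^ j)) [^]\<^bsub>Q\<^esub> nat m)"
      using fixes_prefix_Suc_pow[OF gZ IH] Suc.prems by simp
    then show ?case
      using monoid.nat_pow_pow[OF group.is_monoid[OF group_Q] YQ, of "nat m ^ j" "nat m"]
      by (simp add: mult.commute)
  qed
  have "fixes_prefix (Suc r) (Yf [^]\<^bsub>Q\<^esub> (nat m ^ Suc r))" using h[OF le_refl] .
  moreover have "Yf [^]\<^bsub>Q\<^esub> (nat m ^ Suc r) \<in> Bij Om"
    using lies_over_Bij[OF lies_over_pow[OF Yg]] .
  ultimately have "Yf [^]\<^bsub>Q\<^esub> (nat m ^ Suc r) = \<one>\<^bsub>Q\<^esub>" using fixes_prefix_eq_one by blast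
  then show ?thesis
    using monoid.nat_pow_pow[OF group.is_monoid[OF group_Q] XQ, of "card Cos" "nat m ^ Suc r"]
    by (simp add: Yf_def)
qed

lemma finite_Om: "finite Om"
  using finite_Cos by (simp add: Om_def Cos_def Vec_def finite_PiE)

lemma finite_carrier_Q: "finite (carrier Q)"
proof -
  have "carrier Q \<subseteq> PiE Om (\<lambda>_. Om)"
    by (auto simp: BijGroup_carrier Bij_def PiE_def bij_betw_def)
  then show ?thesis using finite_PiE[OF finite_Om, of "\<lambda>_. Om"] finite_Om finite_subset by blast
qed

end

sublocale hnn_perm \<subseteq> hc: hnn_ext G H
  by (intro hnn_ext.intro hnn_ext_axioms.intro G.group_axioms H_subgroup)

sublocale hnn_perm \<subseteq> hu: hnn_rep G "BijGroup Om" H gperm "tperm 1"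
  by (rule hnn_rep_perm)

context hnn_perm begin

abbreviation "rep \<equiv> HNN_lift Q gperm (tperm 1)"

lemma rep_hom: "rep \<in> hom (HNN_trivial G H) Q" by (rule hu.HNN_lift_hom)

lemma group_hom_rep: "group_hom (HNN_trivial G H) Q rep"
  using rep_hom hc.Gm.group_axioms group_Q by (simp add: group_hom_def group_hom_axioms_def)

lemma rep_emb: "c \<in> carrier G \<Longrightarrow> rep (hc.emb c) = gperm c"
  by (simp add: hc.emb_def hu.HNN_lift_class hc.hnn_word_Inl hu.eval_word_single eval_letter_def)

lemma rep_stable: "rep hc.stable = tperm 1"
  by (simp add: hc.stable_def hu.HNN_lift_class hc.hnn_word_Inr hu.eval_word_single eval_letter_def)

lemma rep_tconj: "c \<in> carrier G \<Longrightarrow> rep (hc.tconj c a) = gperm c \<otimes>\<^bsub>Q\<^esub> tperm a \<otimes>\<^bsub>Q\<^esub> gperm (inv\<^bsub>G\<^esub> c)"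
proof -
  assume c: "c \<in> carrier G"
  have "rep (hc.tconj c a) = rep (hc.emb c) \<otimes>\<^bsub>Q\<^esub> rep (hc.stable [^]\<^bsub>HNN_trivial G H\<^esub> a) \<otimes>\<^bsub>Q\<^esub> rep (inv\<^bsub>HNN_trivial G H\<^esub> hc.emb c)"
    using c by (simp add: hc.tconj_def group_hom.hom_mult[OF group_hom_rep])
  also have "\<dots> = gperm c \<otimes>\<^bsub>Q\<^esub> tperm a \<otimes>\<^bsub>Q\<^esub> gperm (inv\<^bsub>G\<^esub> c)"
    using c by (simp add: group_hom.hom_int_pow[OF group_hom_rep] rep_stable tperm_pow rep_emb hc.emb_inv[symmetric])
  finally show ?thesis .
qed

lemma rep_tconj_apply:
  assumes c: "c \<in> carrier G" and C: "C \<in> Cos" and v: "v \<in> Vec"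
  shows "rep (hc.tconj c a) (C, v) = (C, shear (dcoset (inv\<^bsub>G\<^esub> c <#\<^bsub>G\<^esub> C)) a v)"
proof -
  have ic: "inv\<^bsub>G\<^esub> c \<in> carrier G" using c by simp
  have o: "(C, v) \<in> Om" using C v by (simp add: Om_def)
  have o2: "(inv\<^bsub>G\<^esub> c <#\<^bsub>G\<^esub> C, v) \<in> Om" using l_coset_Cos[OF C ic] v by (simp add: Om_def)
  have o3: "(inv\<^bsub>G\<^esub> c <#\<^bsub>G\<^esub> C, shear (dcoset (inv\<^bsub>G\<^esub> c <#\<^bsub>G\<^esub> C)) a v) \<in> Om"
    using l_coset_Cos[OF C ic] shear_Vec[OF v] by (simp add: Om_def)
  have eq: "gperm c \<otimes>\<^bsub>Q\<^esub> tperm a \<otimes>\<^bsub>Q\<^esub> gperm (inv\<^bsub>G\<^esub> c) = compose Om (compose Om (gperm c) (tperm a)) (gperm (inv\<^bsub>G\<^esub> c))"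
    using c ic by (simp add: BijGroup_mult gperm_Bij tperm_Bij compose_Bij)
  have "c <#\<^bsub>G\<^esub> (inv\<^bsub>G\<^esub> c <#\<^bsub>G\<^esub> C) = C" using c ic C by (simp add: l_coset_assoc l_coset_one)
  moreover have "rep (hc.tconj c a) (C, v) = gperm c (tperm a (gperm (inv\<^bsub>G\<^esub> c) (C, v)))"
    using o o2 gperm_Om[OF o ic] tperm_Om by (simp add: rep_tconj[OF c] eq compose_def)
  ultimately show ?thesis using o o2 o3 c
    by (simp add: gperm_def tperm_def)
qed

lemma rep_tconj_prod_Cons:
  assumes y: "fst y \<in> carrier G" and l: "\<forall>y\<in>set l. fst y \<in> carrier G" and w: "\<omega> \<in> Om"
  shows "rep (hc.tconj_prod (y # l)) \<omega> = rep (hc.tconj (fst y) (snd y)) (rep (hc.tconj_prod l) \<omega>)"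
proof -
  have B1: "rep (hc.tconj (fst y) (snd y)) \<in> Bij Om"
    using hom_in_carrier[OF rep_hom hc.tconj_closed[OF y]] by (simp add: BijGroup_carrier)
  have B2: "rep (hc.tconj_prod l) \<in> Bij Om"
    using hom_in_carrier[OF rep_hom hc.tconj_prod_closed[OF l]] by (simp add: BijGroup_carrier)
  have e: "rep (hc.tconj_prod (y # l)) = compose Om (rep (hc.tconj (fst y) (snd y))) (rep (hc.tconj_prod l))"
    using y l B1 B2 by (simp add: group_hom.hom_mult[OF group_hom_rep] hc.tconj_prod_closed BijGroup_mult)
  then show ?thesis using w by (simp add: compose_def)
qed

lemma rep_tconj_prod_fst:
  "\<forall>y\<in>set l. fst y \<in> carrier G \<Longrightarrow> \<omega> \<in> Om \<Longrightarrow> rep (hc.tconj_prod l) \<omega> \<in> Om \<and> fst (rep (hc.tconj_prod l) \<omega>) = fst \<omega>"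
proof (induction l arbitrary: \<omega>)
  case Nil
  then show ?case using group_hom.hom_one[OF group_hom_rep] by (simp add: BijGroup_one)
next
  case (Cons y l)
  have y: "fst y \<in> carrier G" and l: "\<forall>y\<in>set l. fst y \<in> carrier G" using Cons.prems by auto
  obtain C v where Cv: "rep (hc.tconj_prod l) \<omega> = (C, v)" "C \<in> Cos" "v \<in> Vec" "C = fst \<omega>"
    using Cons.IH[OF l Cons.prems(2)] by (cases "rep (hc.tconj_prod l) \<omega>") (auto simp: Om_def)
  show ?case
    using Cv rep_tconj_prod_Cons[OF y l Cons.prems(2)] rep_tconj_apply[OF y Cv(2) Cv(3)] shear_Vec[OF Cv(3)]
    by (simp add: Om_def)
qed

lemma tperm_inv: "inv\<^bsub>Q\<^esub> (tperm 1) = tperm (-1)"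
proof -
  have "tperm (-1) \<otimes>\<^bsub>Q\<^esub> tperm 1 = \<one>\<^bsub>Q\<^esub>" by (simp add: tperm_mult tperm_one)
  then show ?thesis using group.inv_equality[OF group_Q] tperm_carrier by metis
qed

lemma eval_word_lies_over: "hnn_word G w \<Longrightarrow> \<exists>y. lies_over (eval_word Q gperm (tperm 1) w) y"
proof (induction w)
  case Nil then show ?case using lies_over_one by (auto simp: eval_word_def)
next
  case (Cons a w)
  have a: "a \<in> Inl ` carrier G \<union> range Inr" and w: "hnn_word G w"
    using Cons.prems hnn_word_Cons by auto
  obtain y where y: "lies_over (eval_word Q gperm (tperm 1) w) y" using Cons.IH[OF w] by blast
  have "\<exists>z. lies_over (eval_letter Q gperm (tperm 1) a) z"
  proof (cases a)
    case (Inl g) then show ?thesis using a lies_over_gperm by (auto simp: eval_letter_def)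
  next
    case (Inr b) then show ?thesis using lies_over_tperm tperm_inv by (cases b) (auto simp: eval_letter_def)
  qed
  then obtain z where z: "lies_over (eval_letter Q gperm (tperm 1) a) z" by blast
  have "eval_word Q gperm (tperm 1) (a # w) = eval_letter Q gperm (tperm 1) a \<otimes>\<^bsub>Q\<^esub> eval_word Q gperm (tperm 1) w" by (simp add: eval_word_def)
  then show ?case using lies_over_mult[OF z y] by auto
qed

lemma rep_lies_over: "x \<in> carrier (HNN_trivial G H) \<Longrightarrow> \<exists>y. lies_over (rep x) y"
proof -
  assume "x \<in> carrier (HNN_trivial G H)"
  then obtain w where "x = hnn_rel G H `` {w}" "hnn_word G w"
    by (auto simp: G.HNN_carrier elim!: quotientE)
  then show ?thesis using eval_word_lies_over by (simp add: hu.HNN_lift_class)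
qed

lemma p_power_index_normal_kernel_rep:
  assumes p: "Factorial_Ring.prime p" and a: "card Cos = p ^ a" and e: "nat m = p ^ e"
  shows "p_power_index_normal (HNN_trivial G H) p (kernel (HNN_trivial G H) Q rep)"
proof -
  let ?I = "rep ` carrier (HNN_trivial G H)"
  let ?Q' = "Q\<lparr>carrier := ?I\<rparr>"
  have sub: "subgroup ?I Q" using group_hom.img_is_subgroup[OF group_hom_rep] .
  have gQ': "group ?Q'" using group.subgroup_imp_group[OF group_Q sub] .
  have finI: "finite ?I" using finite_carrier_Q sub subgroup.subset finite_subset by blast
  have K: "card Cos * nat m ^ Suc r = p ^ (a + e * Suc r)" using a e by (simp add: power_add power_mult)
  have "\<And>x. x \<in> carrier ?Q' \<Longrightarrow> x [^]\<^bsub>?Q'\<^esub> (p ^ (a + e * Suc r)) = \<one>\<^bsub>?Q'\<^esub>"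
  proof -
    fix x assume "x \<in> carrier ?Q'"
    then obtain g where g: "g \<in> carrier (HNN_trivial G H)" "x = rep g" by auto
    obtain y where "lies_over x y" using rep_lies_over[OF g(1)] g(2) by blast
    then have "x [^]\<^bsub>Q\<^esub> (p ^ (a + e * Suc r)) = \<one>\<^bsub>Q\<^esub>" using lies_over_exponent K by metis
    then show "x [^]\<^bsub>?Q'\<^esub> (p ^ (a + e * Suc r)) = \<one>\<^bsub>?Q'\<^esub>"
      using monoid.nat_pow_consistent[OF group.is_monoid[OF group_Q], of x _ ?I] by simp
  qed
  then obtain n where "order ?Q' = p ^ n" using group.order_prime_power_if_exponent[OF gQ' _ p] finI by auto
  then have "card (rcosets\<^bsub>HNN_trivial G H\<^esub> (kernel (HNN_trivial G H) Q rep)) = p ^ n"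
    using group_hom.card_rcosets_kernel[OF group_hom_rep] by (simp add: order_def)
  moreover have "kernel (HNN_trivial G H) Q rep \<lhd> HNN_trivial G H" using group_hom.normal_kernel[OF group_hom_rep] .
  ultimately show ?thesis by (auto simp: p_power_index_normal_def)
qed

definition unit_vec :: "nat \<Rightarrow> int" where
  "unit_vec = (\<lambda>k\<in>{..r}. if k = 0 then 1 else 0)"

lemma N_Cos: "N \<in> Cos"
proof -
  have NG: "N \<subseteq> carrier G" using N_subgroup subgroup.subset by blast
  have "N #>\<^bsub>G\<^esub> \<one>\<^bsub>G\<^esub> \<in> rcosets\<^bsub>G\<^esub> N" using G.rcosetsI[OF NG] by simp
  then show ?thesis using NG by (simp add: Cos_def)
qed

lemma unit_vec_Vec: "unit_vec \<in> Vec" using m by (auto simp: unit_vec_def Vec_def)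

text \<open>The factors act from the right; the \<open>k\<close>-th one shears only layer \<open>k\<close> of the fibre over \<open>N\<close>
  and moves the partial product of the exponents one layer up.\<close>

lemma rep_reduced_unit_vec:
  assumes rl: "hc.reduced l" and r: "r = length l"
    and zl: "\<And>k. 1 \<le> k \<Longrightarrow> k \<le> r \<Longrightarrow> lbl k = dcoset (inv\<^bsub>G\<^esub> (fst (l ! (r - k))) <#\<^bsub>G\<^esub> N)"
  shows "n \<le> r \<Longrightarrow> \<exists>v. rep (hc.tconj_prod (drop (r - n) l)) (N, unit_vec) = (N, v) \<and> v \<in> Vec \<and>
      (\<forall>k. n < k \<longrightarrow> k \<le> r \<longrightarrow> v k = 0) \<and> v n = prod_list (map snd (drop (r - n) l)) mod m"
proof (induction n)
  case 0
  have o: "(N, unit_vec) \<in> Om" using N_Cos unit_vec_Vec by (simp add: Om_def)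
  have "drop r l = []" using r by simp
  then have "rep (hc.tconj_prod (drop r l)) = \<one>\<^bsub>Q\<^esub>" using group_hom.hom_one[OF group_hom_rep] by simp
  then have "rep (hc.tconj_prod (drop (r - 0) l)) (N, unit_vec) = (N, unit_vec)" using o by (simp add: BijGroup_one)
  moreover have "\<forall>k. 0 < k \<longrightarrow> k \<le> r \<longrightarrow> unit_vec k = 0" by (simp add: unit_vec_def)
  moreover have "unit_vec 0 = prod_list (map snd (drop (r - 0) l)) mod m"
    using m \<open>drop r l = []\<close> by (simp add: unit_vec_def)
  ultimately show ?case using unit_vec_Vec by blast
next
  case (Suc n)
  obtain v where v: "rep (hc.tconj_prod (drop (r - n) l)) (N, unit_vec) = (N, v)" "v \<in> Vec"
      "\<forall>k. n < k \<longrightarrow> k \<le> r \<longrightarrow> v k = 0" "v n = prod_list (map snd (drop (r - n) l)) mod m"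
    using Suc by auto
  define i where "i = r - Suc n"
  have il: "i < length l" using Suc.prems r by (simp add: i_def)
  have dr: "drop (r - Suc n) l = l ! i # drop (r - n) l"
    using Cons_nth_drop_Suc[OF il] Suc.prems by (simp add: i_def Suc_diff_Suc)
  have lG: "\<forall>y\<in>set l. fst y \<in> carrier G" using hc.reduced_carrier[OF rl] .
  have c: "fst (l ! i) \<in> carrier G" using lG il by simp
  have restG: "\<forall>y\<in>set (drop (r - n) l). fst y \<in> carrier G" using lG by (meson in_set_dropD)
  have o: "(N, unit_vec) \<in> Om" using N_Cos unit_vec_Vec by (simp add: Om_def)
  have ic: "inv\<^bsub>G\<^esub> (fst (l ! i)) \<in> carrier G" using c by simp
  have z: "lbl (Suc n) = dcoset (inv\<^bsub>G\<^esub> (fst (l ! i)) <#\<^bsub>G\<^esub> N)" using zl[of "Suc n"] Suc.prems by (simp add: i_def)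
  define v' where "v' = shear (lbl (Suc n)) (snd (l ! i)) v"
  have step: "rep (hc.tconj_prod (drop (r - Suc n) l)) (N, unit_vec) = (N, v')"
    using rep_tconj_prod_Cons[OF c restG o] dr v(1) rep_tconj_apply[OF c N_Cos v(2)] z by (simp add: v'_def)
  have v'V: "v' \<in> Vec" using shear_Vec[OF v(2)] by (simp add: v'_def)
  have hi: "\<forall>k. Suc n < k \<longrightarrow> k \<le> r \<longrightarrow> v' k = 0"
    using v(3) by (auto simp: v'_def shear_def)
  have "v' (Suc n) = (v (Suc n) + snd (l ! i) * v n) mod m"
    using Suc.prems by (simp add: v'_def shear_def)
  also have "\<dots> = (snd (l ! i) * (prod_list (map snd (drop (r - n) l)) mod m)) mod m"
    using v(3) v(4) Suc.prems by simp
  also have "\<dots> = prod_list (map snd (drop (r - Suc n) l)) mod m"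
    using dr by (simp add: mod_mult_right_eq)
  finally show ?case using step v'V hi by blast
qed

lemma rep_tconj_prod_moves_unit_vec:
  assumes rl: "hc.reduced l" and r: "r = length l"
    and zl: "\<And>k. 1 \<le> k \<Longrightarrow> k \<le> r \<Longrightarrow> lbl k = dcoset (inv\<^bsub>G\<^esub> (fst (l ! (r - k))) <#\<^bsub>G\<^esub> N)"
    and "l \<noteq> []" and pm: "prod_list (map snd l) mod m \<noteq> 0"
  shows "rep (hc.tconj_prod l) (N, unit_vec) \<noteq> (N, unit_vec)"
proof -
  obtain v where v: "rep (hc.tconj_prod l) (N, unit_vec) = (N, v)" "v r = prod_list (map snd l) mod m"
    using rep_reduced_unit_vec[OF rl r zl, of r] by auto
  have "r \<noteq> 0" using \<open>l \<noteq> []\<close> r by simp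
  then have "v r \<noteq> unit_vec r" using v(2) pm by (simp add: unit_vec_def)
  then show ?thesis using v(1) by auto
qed

lemma rep_nontrivial:
  assumes rl: "hc.reduced l" and r: "r = length l"
    and zl: "\<And>k. 1 \<le> k \<Longrightarrow> k \<le> r \<Longrightarrow> lbl k = dcoset (inv\<^bsub>G\<^esub> (fst (l ! (r - k))) <#\<^bsub>G\<^esub> N)"
    and g: "g \<in> carrier G" and gN: "g \<noteq> \<one>\<^bsub>G\<^esub> \<Longrightarrow> g \<notin> N"
    and ne: "l \<noteq> [] \<or> g \<noteq> \<one>\<^bsub>G\<^esub>"
    and pm: "prod_list (map snd l) mod m \<noteq> 0"
  shows "rep (hc.tconj_prod l \<otimes>\<^bsub>HNN_trivial G H\<^esub> hc.emb g) \<noteq> \<one>\<^bsub>Q\<^esub>"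
proof -
  have lG: "\<forall>y\<in>set l. fst y \<in> carrier G" using hc.reduced_carrier[OF rl] .
  have o: "(N, unit_vec) \<in> Om" using N_Cos unit_vec_Vec by (simp add: Om_def)
  have B1: "rep (hc.tconj_prod l) \<in> Bij Om"
    using hom_in_carrier[OF rep_hom hc.tconj_prod_closed[OF lG]] by (simp add: BijGroup_carrier)
  have eq: "rep (hc.tconj_prod l \<otimes>\<^bsub>HNN_trivial G H\<^esub> hc.emb g) = compose Om (rep (hc.tconj_prod l)) (gperm g)"
    using g lG B1 gperm_Bij[OF g]
    by (simp add: group_hom.hom_mult[OF group_hom_rep] hc.tconj_prod_closed rep_emb BijGroup_mult)
  have fg: "gperm g (N, unit_vec) = (g <#\<^bsub>G\<^esub> N, unit_vec)" using o by (simp add: gperm_def)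
  have o2: "(g <#\<^bsub>G\<^esub> N, unit_vec) \<in> Om" using gperm_Om[OF o g] fg by simp
  have val: "rep (hc.tconj_prod l \<otimes>\<^bsub>HNN_trivial G H\<^esub> hc.emb g) (N, unit_vec) = rep (hc.tconj_prod l) (g <#\<^bsub>G\<^esub> N, unit_vec)"
    using eq o fg by (simp add: compose_def)
  show ?thesis
  proof (cases "g \<in> N")
    case True
    then have "g = \<one>\<^bsub>G\<^esub>" "l \<noteq> []" using gN ne by auto
    then have "rep (hc.tconj_prod l \<otimes>\<^bsub>HNN_trivial G H\<^esub> hc.emb g) (N, unit_vec) \<noteq> (N, unit_vec)"
      using val l_coset_N[OF N_Cos True] rep_tconj_prod_moves_unit_vec[OF rl r zl _ pm] by simp
    then show ?thesis using o by (auto simp: BijGroup_one)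
  next
    case False
    have "g \<in> g <#\<^bsub>G\<^esub> N" using g N_subgroup by (force simp: l_coset_def intro: subgroup.one_closed)
    then have "g <#\<^bsub>G\<^esub> N \<noteq> N" using False by auto
    then have "fst (rep (hc.tconj_prod l \<otimes>\<^bsub>HNN_trivial G H\<^esub> hc.emb g) (N, unit_vec)) \<noteq> N"
      using val rep_tconj_prod_fst[OF lG o2] by simp
    then show ?thesis using o by (auto simp: BijGroup_one)
  qed
qed

end

section \<open>Residual \<open>p\<close>-finiteness\<close>

lemma (in group) dcosets_neq_if_coset_disjoint:
  assumes N: "N \<lhd> G" and H: "subgroup H G"
    and c: "c \<in> carrier G" and c': "c' \<in> carrier G"
    and dis: "((inv\<^bsub>G\<^esub> c' \<otimes>\<^bsub>G\<^esub> c) <#\<^bsub>G\<^esub> N) \<inter> H = {}"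
  shows "H <#>\<^bsub>G\<^esub> (inv\<^bsub>G\<^esub> c <#\<^bsub>G\<^esub> N) \<noteq> H <#>\<^bsub>G\<^esub> (inv\<^bsub>G\<^esub> c' <#\<^bsub>G\<^esub> N)"
proof
  assume eq: "H <#>\<^bsub>G\<^esub> (inv\<^bsub>G\<^esub> c <#\<^bsub>G\<^esub> N) = H <#>\<^bsub>G\<^esub> (inv\<^bsub>G\<^esub> c' <#\<^bsub>G\<^esub> N)"
  have N_subgroup: "subgroup N G" using N normal_imp_subgroup by blast
  have "inv\<^bsub>G\<^esub> c' \<in> H <#>\<^bsub>G\<^esub> (inv\<^bsub>G\<^esub> c' <#\<^bsub>G\<^esub> N)"
  proof -
    have "inv\<^bsub>G\<^esub> c' = \<one>\<^bsub>G\<^esub> \<otimes>\<^bsub>G\<^esub> (inv\<^bsub>G\<^esub> c' \<otimes>\<^bsub>G\<^esub> \<one>\<^bsub>G\<^esub>)"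
      using c' by simp
    then show ?thesis unfolding set_mult_def l_coset_def
      using subgroup.one_closed[OF H] subgroup.one_closed[OF N_subgroup] by blast
  qed
  then have "inv\<^bsub>G\<^esub> c' \<in> H <#>\<^bsub>G\<^esub> (inv\<^bsub>G\<^esub> c <#\<^bsub>G\<^esub> N)" using eq by simp
  then obtain h n where hn: "h \<in> H" "n \<in> N" "inv\<^bsub>G\<^esub> c' = h \<otimes>\<^bsub>G\<^esub> (inv\<^bsub>G\<^esub> c \<otimes>\<^bsub>G\<^esub> n)"
    unfolding set_mult_def l_coset_def by blast
  have hG: "h \<in> carrier G" using hn H subgroup.subset by blast
  have nG: "n \<in> carrier G" using hn N_subgroup subgroup.subset by blast
  have inN: "inv\<^bsub>G\<^esub> c \<otimes>\<^bsub>G\<^esub> inv\<^bsub>G\<^esub> n \<otimes>\<^bsub>G\<^esub> c \<in> N"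
    using normal.inv_op_closed1[OF N c subgroup.m_inv_closed[OF N_subgroup hn(2)]] .
  have icn: "inv\<^bsub>G\<^esub> c \<otimes>\<^bsub>G\<^esub> n \<in> carrier G" using c nG by simp
  have "h = inv\<^bsub>G\<^esub> c' \<otimes>\<^bsub>G\<^esub> inv\<^bsub>G\<^esub> (inv\<^bsub>G\<^esub> c \<otimes>\<^bsub>G\<^esub> n)"
    using hn(3) c' hG icn by (simp add: inv_solve_right)
  also have "\<dots> = (inv\<^bsub>G\<^esub> c' \<otimes>\<^bsub>G\<^esub> c) \<otimes>\<^bsub>G\<^esub> (inv\<^bsub>G\<^esub> c \<otimes>\<^bsub>G\<^esub> inv\<^bsub>G\<^esub> n \<otimes>\<^bsub>G\<^esub> c)"
  proof -
    have cc: "c \<otimes>\<^bsub>G\<^esub> (inv\<^bsub>G\<^esub> c \<otimes>\<^bsub>G\<^esub> x) = x" if "x \<in> carrier G" for x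
      using c that by (simp add: m_assoc[symmetric])
    show ?thesis using c c' nG cc[of "inv\<^bsub>G\<^esub> n \<otimes>\<^bsub>G\<^esub> c"] by (simp add: inv_mult_group m_assoc)
  qed
  finally have "h \<in> (inv\<^bsub>G\<^esub> c' \<otimes>\<^bsub>G\<^esub> c) <#\<^bsub>G\<^esub> N" using inN unfolding l_coset_def by blast
  then show False using dis hn(1) by blast
qed

lemma (in hnn_ext) normal_form_separated_by_p_quotient:
  assumes p: "Factorial_Ring.prime p" and l: "reduced l" and g: "g \<in> carrier G"
    and ne: "l \<noteq> [] \<or> g \<noteq> \<one>\<^bsub>G\<^esub>"
    and N: "p_power_index_normal G p N" and gN: "g \<noteq> \<one>\<^bsub>G\<^esub> \<Longrightarrow> g \<notin> N"
    and dis: "\<And>j. Suc j < length l \<Longrightarrow>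
      ((inv\<^bsub>G\<^esub> (fst (l ! j)) \<otimes>\<^bsub>G\<^esub> fst (l ! Suc j)) <#\<^bsub>G\<^esub> N) \<inter> H = {}"
  shows "\<exists>K. p_power_index_normal Gam p K \<and> tconj_prod l \<otimes>\<^bsub>Gam\<^esub> emb g \<notin> K"
proof -
  define r where "r = length l"
  obtain e where e: "e > 0" "\<not> int (p ^ e) dvd prod_list (map snd l)"
    using prime_power_not_dvd[OF p reduced_prod_nonzero[OF l]] .
  define m :: int where "m = int (p ^ e)"
  have m: "m > 1" using e(1) prime_gt_1_nat[OF p] by (simp add: m_def)
  have lG: "i < r \<Longrightarrow> fst (l ! i) \<in> carrier G" for i
    using reduced_carrier[OF l] by (simp add: r_def)
  \<comment> \<open>layer \<open>k\<close> is the one sheared by the \<open>k\<close>-th factor from the right\<close>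
  define lbl where "lbl k = H <#>\<^bsub>G\<^esub> (inv\<^bsub>G\<^esub> (fst (l ! (r - k))) <#\<^bsub>G\<^esub> N)" for k
  have lbl: "lbl k \<noteq> lbl (Suc k)" if "1 \<le> k" "k < r" for k
  proof -
    define j where "j = r - Suc k"
    have j: "Suc j < r" "r - k = Suc j" "r - Suc k = j" using that by (simp_all add: j_def)
    have "N \<lhd> G" using N by (simp add: p_power_index_normal_def)
    then show ?thesis unfolding lbl_def j(2,3)
      using G.dcosets_neq_if_coset_disjoint[OF _ H lG[OF j(1)] lG[of j] dis[OF j(1)[unfolded r_def]]] j(1)
      by simp
  qed
  interpret A: hnn_perm G H N r m lbl
    using G.group_axioms H N p_power_index_normal_finite[OF p N] m lbl
    by (intro hnn_perm.intro hnn_perm_axioms.intro) (auto simp: p_power_index_normal_def)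
  obtain a where a: "card A.Cos = p ^ a" using N by (auto simp: A.Cos_def p_power_index_normal_def)
  have "nat m = p ^ e" unfolding m_def by (rule nat_int)
  then have K: "p_power_index_normal Gam p (kernel Gam A.Q A.rep)"
    using A.p_power_index_normal_kernel_rep[OF p a] by blast
  have "prod_list (map snd l) mod m \<noteq> 0" using e(2) by (simp add: m_def dvd_eq_mod_eq_0)
  then have "A.rep (tconj_prod l \<otimes>\<^bsub>Gam\<^esub> emb g) \<noteq> \<one>\<^bsub>A.Q\<^esub>"
    using A.rep_nontrivial[OF l r_def _ g gN ne] by (simp add: lbl_def A.dcoset_def)
  then show ?thesis using K by (auto simp: kernel_def)
qed

theorem lemma2p9:
  fixes G :: "('a, 'b) monoid_scheme" and H :: "'a set" and p :: nat
  assumes "Factorial_Ring.prime p"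
    and "group G"
    and "subgroup H G"
    and "\<And>q::nat. Factorial_Ring.prime q \<Longrightarrow> closedin (pro_p_topology G q) H"
    and "residually_p_finite G p"
  shows "residually_p_finite (HNN_trivial G H) p"
proof -
  interpret hnn_ext G H using assms(2,3) by (intro hnn_ext.intro hnn_ext_axioms.intro)
  show ?thesis unfolding residually_p_finite_def
  proof (intro ballI impI)
    fix \<gamma> assume \<gamma>: "\<gamma> \<in> carrier Gam" and \<gamma>1: "\<gamma> \<noteq> \<one>\<^bsub>Gam\<^esub>"
    obtain l g where l: "reduced l" and g: "g \<in> carrier G" and \<gamma>_eq: "\<gamma> = tconj_prod l \<otimes>\<^bsub>Gam\<^esub> emb g"
      using carrier_normal_form[OF \<gamma>] .
    have ne: "l \<noteq> [] \<or> g \<noteq> \<one>\<^bsub>G\<^esub>" using \<gamma>1 \<gamma>_eq by auto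
    obtain N0 where N0: "p_power_index_normal G p N0" "g \<noteq> \<one>\<^bsub>G\<^esub> \<Longrightarrow> g \<notin> N0"
      using assms(5) g G.p_power_index_normal_carrier unfolding residually_p_finite_def by blast
    define S where "S = (\<lambda>j. inv\<^bsub>G\<^esub> (fst (l ! j)) \<otimes>\<^bsub>G\<^esub> fst (l ! Suc j)) ` {j. Suc j < length l}"
    have "finite {j. Suc j < length l}" by (rule finite_subset[of _ "{..<length l}"]) auto
    then have S: "finite S" "S \<subseteq> carrier G - H"
      using reduced_nth[OF l] reduced_carrier[OF l] by (auto simp: S_def)
    obtain N where "N \<subseteq> N0" "p_power_index_normal G p N" "\<forall>x\<in>S. (x <#\<^bsub>G\<^esub> N) \<inter> H = {}"
      using G.closedin_pro_p_topology_finite_avoid[OF assms(1) assms(4)[OF assms(1)] N0(1) S] by blast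
    then show "\<exists>K. p_power_index_normal Gam p K \<and> \<gamma> \<notin> K"
      using normal_form_separated_by_p_quotient[OF assms(1) l g ne] N0(2) \<gamma>_eq by (auto simp: S_def)
  qed
qed

end
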